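(* Let $\Delta$ be a simplicial polytopal fan in $\mathbb{R}^d$ with ray generators $\mathbf{v}_1,\ldots,\mathbf{v}_n$. Let $\mathbf{u}^{(1)},\mathbf{u}^{(2)},\ldots$ be a sequence with $\mathbf{u}^{(i)}\in\{\mathbf{v}_1/\|\mathbf{v}_1\|,\ldots,\mathbf{v}_n/\|\mathbf{v}_n\|\}$ for all $i\ge1$, such that there exist $\delta>0$ and $N\in\mathbb{N}$ with \[ |\{\ell\in[m]\colon\mathbf{u}^{(\ell)}=\mathbf{v}_i/\|\mathbf{v}_i\|\}|\ge m\delta \] for all $m\ge N$ and all $1\le i\le n$. Let $P=P(\mathbf{h}_0)\in\mathcal{P}(\Delta)$ and $y^{(i)}=h_P(\mathbf{u}^{(i)})+\varepsilon^{(i)}$, where the $\varepsilon^{(i)}\sim\mathcal{N}(0,\sigma_i^2)$ are independent with $\sigma_i^2\le\gamma<\infty$. Let $\hat{P}^\Delta_m(U,\mathbf{y})$ be the least-squares estimate based on the first $m$ data points. Then \[ \mathbb{P}\big(\lim_{m\to\infty}\hat{P}^\Delta_m(U,\mathbf{y})=P\big)=1 \] (convergence in Hausdorff distance).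
   Context: A fan is simplicial if every cone is generated by linearly independent vectors; polytopal if it is the normal fan of a polytope. $h_P(\mathbf{u})=\max_{\mathbf{x}\in P}\langle\mathbf{x},\mathbf{u}\rangle$. For $\mathbf{h}\in\mathbb{R}^n$, $P(\mathbf{h})=\{\mathbf{x}\colon\langle\mathbf{x},\mathbf{v}_i\rangle\le h_i\ \forall i\}$. The deformation cone $\mathcal{P}(\Delta)$ is the set of polytopes whose normal fan is coarsened by $\Delta$, identified via support vectors $(h_P(\mathbf{v}_i))_i$ with a closed polyhedral cone in $\mathbb{R}^n$. With $U=(\mathbf{u}^{(1)},\ldots,\mathbf{u}^{(m)})^\mathsf{T}$, $\hat{P}^\Delta_m(U,\mathbf{y})$ is the set of $Q\in\mathcal{P}(\Delta)$ minimizing $\frac1m\sum_{i=1}^m(h_Q(\mathbf{u}^{(i)})-y^{(i)})^2$. *)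

theory Defs
  imports "HOL-Probability.Probability"
begin

definition gen_cone :: "(nat \<Rightarrow> 'a::real_vector) \<Rightarrow> nat set \<Rightarrow> 'a set" where
  "gen_cone v \<sigma> = {(\<Sum>i\<in>\<sigma>. c i *\<^sub>R v i) | c. \<forall>i\<in>\<sigma>. 0 \<le> c i}"

text \<open>The cones of the fan: a simplicial fan is encoded by its ray generators
  v 0, ..., v (n-1) and the set S of index sets spanning its cones.\<close>
definition fan_cones :: "(nat \<Rightarrow> 'a::real_vector) \<Rightarrow> nat set set \<Rightarrow> 'a set set" where
  "fan_cones v S = gen_cone v ` S"

definition simplicial_fan :: "(nat \<Rightarrow> 'a::real_vector) \<Rightarrow> nat \<Rightarrow> nat set set \<Rightarrow> bool" where
  "simplicial_fan v n S \<longleftrightarrow>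
     S \<subseteq> Pow {..<n} \<and>
     (\<forall>\<sigma>\<in>S. \<forall>\<tau>. \<tau> \<subseteq> \<sigma> \<longrightarrow> \<tau> \<in> S) \<and>
     (\<forall>i<n. {i} \<in> S) \<and>
     (\<forall>\<sigma>\<in>S. inj_on v \<sigma> \<and> independent (v ` \<sigma>)) \<and>
     (\<forall>\<sigma>\<in>S. \<forall>\<tau>\<in>S. gen_cone v \<sigma> \<inter> gen_cone v \<tau> = gen_cone v (\<sigma> \<inter> \<tau>))"

definition normal_cone :: "'a::real_inner set \<Rightarrow> 'a set \<Rightarrow> 'a set" where
  "normal_cone Q F = {u. \<forall>x\<in>F. \<forall>y\<in>Q. y \<bullet> u \<le> x \<bullet> u}"

definition normal_fan :: "'a::real_inner set \<Rightarrow> 'a set set" where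
  "normal_fan Q = {normal_cone Q F | F. F face_of Q \<and> F \<noteq> {}}"

definition polytopal_fan :: "(nat \<Rightarrow> 'a::euclidean_space) \<Rightarrow> nat set set \<Rightarrow> bool" where
  "polytopal_fan v S \<longleftrightarrow> (\<exists>Q. polytope Q \<and> normal_fan Q = fan_cones v S)"

definition coarsened_by :: "'a::real_inner set set \<Rightarrow> 'a set set \<Rightarrow> bool" where
  "coarsened_by NF F \<longleftrightarrow>
     (\<forall>C\<in>F. \<exists>D\<in>NF. C \<subseteq> D) \<and> (\<forall>D\<in>NF. D = \<Union>{C\<in>F. C \<subseteq> D})"

definition deformation_cone :: "(nat \<Rightarrow> 'a::euclidean_space) \<Rightarrow> nat set set \<Rightarrow> 'a set set" where
  "deformation_cone v S =
     {Q. polytope Q \<and> Q \<noteq> {} \<and> coarsened_by (normal_fan Q) (fan_cones v S)}"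

definition supp :: "'a::real_inner set \<Rightarrow> 'a \<Rightarrow> real" where
  "supp P u = (SUP x\<in>P. x \<bullet> u)"

definition lsq_obj :: "(nat \<Rightarrow> 'a::real_inner) \<Rightarrow> (nat \<Rightarrow> real) \<Rightarrow> nat \<Rightarrow> 'a set \<Rightarrow> real" where
  "lsq_obj u y m Q = (1 / real m) * (\<Sum>l<m. (supp Q (u l) - y l)\<^sup>2)"

definition lse :: "(nat \<Rightarrow> 'a::euclidean_space) \<Rightarrow> nat set set \<Rightarrow> (nat \<Rightarrow> 'a) \<Rightarrow> (nat \<Rightarrow> real) \<Rightarrow> nat \<Rightarrow> 'a set set" where
  "lse v S u y m = {Q \<in> deformation_cone v S.
      \<forall>Q'\<in>deformation_cone v S. lsq_obj u y m Q \<le> lsq_obj u y m Q'}"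

text \<open>Hausdorff distance between (nonempty, bounded) sets.\<close>
definition hausdist :: "'a::metric_space set \<Rightarrow> 'a set \<Rightarrow> real" where
  "hausdist A B = max (SUP x\<in>A. infdist x B) (SUP y\<in>B. infdist y A)"

end

theory Submission
  imports Defs
begin

text \<open>Over the deformation cone the least-squares objective depends only on the support numbers
  \<open>h\<^sub>Q(v\<^sub>i)\<close>, and the realizable vectors of support numbers form the projection of a
  polyhedron (support numbers together with one vertex per cone of the fan). Fourier--Motzkin
  elimination shows that this projection is closed, so the coercive objective attains its minimum.

  Comparing the objective at an estimate \<open>Q\<close> with its value at \<open>P\<close> gives the basic inequality
  \<open>\<Sum>\<^sub>l w(r l)\<^sup>2 \<le> 2 \<Sum>\<^sub>l w(r l) \<epsilon>\<^sub>l\<close>, where \<open>w i = (h\<^sub>Q(v\<^sub>i) - h\<^sub>P(v\<^sub>i)) / \<parallel>v\<^sub>i\<parallel>\<close> and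
  \<open>r l\<close> is the ray sampled at step \<open>l\<close>. Since every ray is sampled with frequency at least \<open>\<delta>\<close>,
  \<open>max\<^sub>i \<bar>w i\<bar>\<close> is bounded by the averages of the noise over the single rays, and these tend to
  zero almost surely by a fourth-moment Borel--Cantelli argument. Finally, support functions in
  the deformation cone are linear on each cone of the fan, so the Hausdorff distance is controlled
  by the support differences on the rays.\<close>

section \<open>Support functions\<close>

lemma bdd_above_inner_image:
  fixes Q :: "'a::real_inner set"
  assumes "bounded Q"
  shows "bdd_above ((\<lambda>x. x \<bullet> u) ` Q)"
proof -
  obtain B where B: "\<forall>x\<in>Q. norm x \<le> B" using assms bounded_iff by blast
  have "x \<bullet> u \<le> B * norm u" if "x \<in> Q" for x
  proof -
    have "x \<bullet> u \<le> norm x * norm u" by (metis norm_cauchy_schwarz)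
    also have "\<dots> \<le> B * norm u" using B that by (simp add: mult_right_mono)
    finally show ?thesis .
  qed
  then show ?thesis unfolding bdd_above_def by blast
qed

lemma inner_le_supp: "bounded Q \<Longrightarrow> y \<in> Q \<Longrightarrow> y \<bullet> u \<le> supp Q u"
  unfolding supp_def by (intro cSUP_upper bdd_above_inner_image)

lemma supp_le: "Q \<noteq> {} \<Longrightarrow> (\<And>y. y \<in> Q \<Longrightarrow> y \<bullet> u \<le> b) \<Longrightarrow> supp Q u \<le> b"
  unfolding supp_def by (intro cSUP_least) auto

lemma supp_eq_inner_maximizer:
  assumes "x \<in> Q" and "\<forall>y\<in>Q. y \<bullet> u \<le> x \<bullet> u"
  shows "supp Q u = x \<bullet> u"
proof (rule antisym)
  show "supp Q u \<le> x \<bullet> u" using assms by (intro supp_le) auto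
  show "x \<bullet> u \<le> supp Q u" unfolding supp_def using assms
    by (intro cSUP_upper) (auto intro: bdd_aboveI2)
qed

lemma infdist_le_of_supp_diff_le:
  fixes Q P :: "'a::euclidean_space set"
  assumes x: "x \<in> Q" and "bounded Q" and P: "closed P" "convex P" "P \<noteq> {}"
    and e: "e \<ge> 0" and diff: "\<And>u. norm u = 1 \<Longrightarrow> supp Q u - supp P u \<le> e"
  shows "infdist x P \<le> e"
proof -
  define p where "p = closest_point P x"
  have p: "p \<in> P" unfolding p_def using P closest_point_in_set by blast
  have "dist x p \<le> e"
  proof (cases "x = p")
    case True then show ?thesis using e by simp
  next
    case False
    define r where "r = norm (x - p)"
    define u where "u = (1 / r) *\<^sub>R (x - p)"
    have r: "r > 0" unfolding r_def using False by simp
    have "y \<bullet> u \<le> p \<bullet> u" if y: "y \<in> P" for y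
    proof -
      have "inner (x - p) (y - p) \<le> 0"
        using any_closest_point_dot[OF P(2,1) p y] closest_point_le[OF P(1)] unfolding p_def by blast
      then have "(1 / r) * inner (x - p) (y - p) \<le> 0" using r by (simp add: divide_nonpos_pos)
      then show ?thesis unfolding u_def by (simp add: inner_diff_right inner_diff_left inner_commute algebra_simps)
    qed
    then have "supp P u \<le> p \<bullet> u" using P(3) by (intro supp_le) auto
    moreover have "x \<bullet> u \<le> supp Q u" using inner_le_supp[OF assms(2) x] .
    moreover have "x \<bullet> u - p \<bullet> u = r"
    proof -
      have "x \<bullet> u - p \<bullet> u = (1 / r) * ((x - p) \<bullet> (x - p))" unfolding u_def
        by (simp add: inner_diff_left algebra_simps)
      also have "(x - p) \<bullet> (x - p) = r * r" unfolding r_def by (simp add: dot_square_norm power2_eq_square)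
      finally show ?thesis using r by simp
    qed
    moreover have "norm u = 1" unfolding u_def r_def using r r_def by simp
    ultimately have "r \<le> e" using diff by fastforce
    then show ?thesis unfolding r_def by (simp add: dist_norm)
  qed
  then show ?thesis using infdist_le[OF p, of x] by linarith
qed

lemma hausdist_le_of_supp_diff_le:
  fixes Q P :: "'a::euclidean_space set"
  assumes Q: "compact Q" "convex Q" "Q \<noteq> {}" and P: "compact P" "convex P" "P \<noteq> {}"
    and e: "e \<ge> 0" and diff: "\<And>u. norm u = 1 \<Longrightarrow> \<bar>supp Q u - supp P u\<bar> \<le> e"
  shows "hausdist Q P \<le> e"
proof -
  have "infdist x P \<le> e" if "x \<in> Q" for x
    using infdist_le_of_supp_diff_le[OF that _ _ P(2,3) e] diff Q(1) P(1)
    by (simp add: compact_imp_bounded compact_imp_closed abs_le_iff)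
  moreover have "infdist x Q \<le> e" if "x \<in> P" for x
    using infdist_le_of_supp_diff_le[OF that _ _ Q(2,3) e] diff Q(1) P(1)
    by (simp add: compact_imp_bounded compact_imp_closed abs_le_iff)
  ultimately show ?thesis unfolding hausdist_def using Q(3) P(3) by (auto intro!: cSUP_least)
qed

lemma hausdist_nonneg:
  fixes Q P :: "'a::euclidean_space set"
  assumes "compact Q" "Q \<noteq> {}"
  shows "0 \<le> hausdist Q P"
proof -
  obtain x where x: "x \<in> Q" using assms by blast
  have "compact ((\<lambda>x. infdist x P) ` Q)"
    using assms by (intro compact_continuous_image continuous_intros)
  then have "infdist x P \<le> (SUP x\<in>Q. infdist x P)"
    using x by (intro cSUP_upper) (auto intro: bounded_imp_bdd_above compact_imp_bounded)
  then show ?thesis unfolding hausdist_def using infdist_nonneg[of x P] by linarith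
qed

section \<open>Cones spanned by ray generators\<close>

lemma gen_coneI: "(\<And>i. i \<in> \<sigma> \<Longrightarrow> 0 \<le> c i) \<Longrightarrow> (\<Sum>i\<in>\<sigma>. c i *\<^sub>R v i) \<in> gen_cone v \<sigma>"
  unfolding gen_cone_def by blast

lemma gen_coneE:
  assumes "w \<in> gen_cone v \<sigma>"
  obtains c where "\<forall>i\<in>\<sigma>. 0 \<le> c i" "w = (\<Sum>i\<in>\<sigma>. c i *\<^sub>R v i)"
  using assms unfolding gen_cone_def by blast

lemma generator_in_gen_cone:
  assumes "finite \<sigma>" "i \<in> \<sigma>"
  shows "v i \<in> gen_cone v \<sigma>"
proof -
  have "(\<Sum>j\<in>\<sigma>. (if j = i then 1 else 0) *\<^sub>R v j) = v i"
    using assms by (simp add: if_distrib[of "\<lambda>a. a *\<^sub>R _"] sum.delta cong: if_cong)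
  then show ?thesis using gen_coneI[of \<sigma> "\<lambda>j. if j = i then 1 else 0" v] by auto
qed

lemma positive_combination_minus_in_gen_cone:
  assumes fin: "finite \<tau>" and c: "\<forall>i\<in>\<tau>. 0 < c i" and w: "w \<in> gen_cone v \<tau>"
  shows "\<exists>t>0. (\<Sum>i\<in>\<tau>. c i *\<^sub>R v i) - t *\<^sub>R w \<in> gen_cone v \<tau>"
proof (cases "\<tau> = {}")
  case True
  then have "w = 0" using w by (auto elim: gen_coneE)
  then show ?thesis using True by (intro exI[of _ 1]) (auto simp: gen_cone_def)
next
  case False
  obtain d where d: "\<forall>i\<in>\<tau>. 0 \<le> d i" "w = (\<Sum>i\<in>\<tau>. d i *\<^sub>R v i)" using w gen_coneE by blast
  define t where "t = Min (c ` \<tau>) / (1 + (\<Sum>i\<in>\<tau>. d i))"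
  have sum_d: "0 \<le> (\<Sum>i\<in>\<tau>. d i)" using d by (simp add: sum_nonneg)
  have t: "t > 0" unfolding t_def using fin False c sum_d by auto
  have "t * d i \<le> c i" if i: "i \<in> \<tau>" for i
  proof -
    have "d i \<le> 1 + (\<Sum>i\<in>\<tau>. d i)" using member_le_sum[of i \<tau> d] d i fin by auto
    moreover have "0 < Min (c ` \<tau>)" using fin False c by simp
    ultimately have "Min (c ` \<tau>) * d i \<le> Min (c ` \<tau>) * (1 + (\<Sum>i\<in>\<tau>. d i))"
      by (intro mult_left_mono) auto
    then have "t * d i \<le> Min (c ` \<tau>)" unfolding t_def using sum_d
      by (simp add: pos_divide_le_eq mult.commute)
    also have "\<dots> \<le> c i" using fin i by simp
    finally show ?thesis .
  qed
  moreover have "(\<Sum>i\<in>\<tau>. c i *\<^sub>R v i) - t *\<^sub>R w = (\<Sum>i\<in>\<tau>. (c i - t * d i) *\<^sub>R v i)"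
    using d by (simp add: scaleR_sum_right sum_subtractf scaleR_diff_left)
  ultimately show ?thesis using t by (auto intro!: exI[of _ t] gen_coneI)
qed

lemma maximizer_of_relint_direction:
  assumes fin: "finite \<tau>" and c: "\<forall>i\<in>\<tau>. 0 < c i"
    and x: "\<forall>w\<in>gen_cone v \<tau>. \<forall>y\<in>Q. y \<bullet> w \<le> x \<bullet> w"
    and z: "z \<in> Q" "x \<bullet> (\<Sum>i\<in>\<tau>. c i *\<^sub>R v i) \<le> z \<bullet> (\<Sum>i\<in>\<tau>. c i *\<^sub>R v i)"
    and w: "w \<in> gen_cone v \<tau>" and y: "y \<in> Q"
  shows "y \<bullet> w \<le> z \<bullet> w"
proof -
  define u where "u = (\<Sum>i\<in>\<tau>. c i *\<^sub>R v i)"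
  obtain t where t: "t > 0" "u - t *\<^sub>R w \<in> gen_cone v \<tau>"
    using positive_combination_minus_in_gen_cone[OF fin c w] unfolding u_def by blast
  have "z \<bullet> (u - t *\<^sub>R w) \<le> x \<bullet> (u - t *\<^sub>R w)" using x t z by blast
  then have "t * (x \<bullet> w) \<le> t * (z \<bullet> w)" using z(2) unfolding u_def[symmetric]
    by (simp add: inner_diff_right)
  then have "x \<bullet> w \<le> z \<bullet> w" using t by simp
  moreover have "y \<bullet> w \<le> x \<bullet> w" using x y w by blast
  ultimately show ?thesis by simp
qed

lemma independent_coefficient_bound:
  fixes v :: "nat \<Rightarrow> 'a::euclidean_space"
  assumes "finite \<sigma>" "inj_on v \<sigma>" "independent (v ` \<sigma>)" "i \<in> \<sigma>"
  shows "\<exists>K>0. \<forall>c. \<bar>c i\<bar> \<le> K * norm (\<Sum>j\<in>\<sigma>. c j *\<^sub>R v j)"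
proof -
  obtain g :: "'a \<Rightarrow> real" where g: "linear g" "\<forall>x\<in>v ` \<sigma>. g x = (if x = v i then 1 else 0)"
    using linear_independent_extend[OF assms(3), of "\<lambda>x. if x = v i then 1 else 0"] by auto
  have gv: "g (v j) = (if j = i then 1 else 0)" if "j \<in> \<sigma>" for j
    using g(2) that assms(2,4) by (auto dest: inj_onD)
  have coefficient: "g (\<Sum>j\<in>\<sigma>. c j *\<^sub>R v j) = c i" for c
  proof -
    have "g (\<Sum>j\<in>\<sigma>. c j *\<^sub>R v j) = (\<Sum>j\<in>\<sigma>. c j * g (v j))"
      using g(1) by (simp add: linear_sum linear_scale)
    also have "\<dots> = (\<Sum>j\<in>\<sigma>. if j = i then c j else 0)" using gv by (intro sum.cong) auto
    finally show ?thesis using assms(1,4) by simp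
  qed
  obtain K where "K > 0" "\<forall>x. norm (g x) \<le> norm x * K"
    using g(1) linear_conv_bounded_linear bounded_linear.pos_bounded by blast
  then show ?thesis using coefficient by (metis mult.commute real_norm_def)
qed

section \<open>The deformation cone of a complete simplicial fan\<close>

text \<open>For a complete fan, the normal fan of \<open>Q\<close> is coarsened by the fan exactly when every cone of
  the fan has a single point of \<open>Q\<close> maximizing all of its directions.\<close>

definition has_cone_maximizers :: "(nat \<Rightarrow> 'a::real_inner) \<Rightarrow> nat set set \<Rightarrow> 'a set \<Rightarrow> bool" where
  "has_cone_maximizers v S Q \<longleftrightarrow> (\<forall>\<sigma>\<in>S. \<exists>x\<in>Q. \<forall>w\<in>gen_cone v \<sigma>. \<forall>y\<in>Q. y \<bullet> w \<le> x \<bullet> w)"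

lemma deformation_cone_polytope: "Q \<in> deformation_cone v S \<Longrightarrow> polytope Q"
  and deformation_cone_nonempty: "Q \<in> deformation_cone v S \<Longrightarrow> Q \<noteq> {}"
  unfolding deformation_cone_def by auto

lemma deformation_cone_compact: "Q \<in> deformation_cone v S \<Longrightarrow> compact Q"
  by (simp add: deformation_cone_polytope polytope_imp_compact)

lemma deformation_cone_has_cone_maximizers:
  assumes "Q \<in> deformation_cone v S"
  shows "has_cone_maximizers v S Q"
  unfolding has_cone_maximizers_def
proof
  fix \<sigma> assume "\<sigma> \<in> S"
  then have "gen_cone v \<sigma> \<in> fan_cones v S" by (simp add: fan_cones_def)
  then obtain F where F: "gen_cone v \<sigma> \<subseteq> normal_cone Q F" "F face_of Q" "F \<noteq> {}"
    using assms unfolding deformation_cone_def coarsened_by_def normal_fan_def by blast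
  then obtain x where "x \<in> F" by blast
  with F show "\<exists>x\<in>Q. \<forall>w\<in>gen_cone v \<sigma>. \<forall>y\<in>Q. y \<bullet> w \<le> x \<bullet> w"
    unfolding normal_cone_def by (blast dest: face_of_imp_subset)
qed

lemma supp_gen_cone_sum:
  assumes "has_cone_maximizers v S Q" and "\<sigma> \<in> S" and "finite \<sigma>" and "\<forall>i\<in>\<sigma>. 0 \<le> c i"
  shows "supp Q (\<Sum>i\<in>\<sigma>. c i *\<^sub>R v i) = (\<Sum>i\<in>\<sigma>. c i * supp Q (v i))"
proof -
  obtain x where x: "x \<in> Q" "\<forall>w\<in>gen_cone v \<sigma>. supp Q w = x \<bullet> w"
    using assms(1,2) unfolding has_cone_maximizers_def by (metis supp_eq_inner_maximizer)
  have "supp Q (\<Sum>i\<in>\<sigma>. c i *\<^sub>R v i) = x \<bullet> (\<Sum>i\<in>\<sigma>. c i *\<^sub>R v i)"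
    using x assms(4) gen_coneI by blast
  also have "\<dots> = (\<Sum>i\<in>\<sigma>. c i * (x \<bullet> v i))" by (simp add: inner_sum_right)
  also have "\<dots> = (\<Sum>i\<in>\<sigma>. c i * supp Q (v i))"
    using x generator_in_gen_cone[OF assms(3), of _ v] by (intro sum.cong) auto
  finally show ?thesis .
qed

lemma polytopal_fan_complete:
  fixes v :: "nat \<Rightarrow> 'a::euclidean_space"
  assumes "polytopal_fan v S" and "S \<noteq> {}"
  shows "\<exists>\<sigma>\<in>S. u \<in> gen_cone v \<sigma>"
proof -
  obtain Q where Q: "polytope Q" "normal_fan Q = fan_cones v S"
    using assms(1) unfolding polytopal_fan_def by blast
  have "Q \<noteq> {}"
  proof
    assume "Q = {}"
    then have "normal_fan Q = {}" unfolding normal_fan_def using face_of_empty by auto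
    then show False using Q assms(2) unfolding fan_cones_def by auto
  qed
  moreover have "continuous_on Q (\<lambda>y. y \<bullet> u)" by (intro continuous_intros)
  ultimately obtain x where x: "x \<in> Q" "\<forall>y\<in>Q. y \<bullet> u \<le> x \<bullet> u"
    using continuous_attains_sup[of Q "\<lambda>y. y \<bullet> u"] Q(1) polytope_imp_compact by blast
  define F where "F = Q \<inter> {y. u \<bullet> y = x \<bullet> u}"
  have "F face_of Q" unfolding F_def using x Q(1) polytope_imp_convex
    by (intro face_of_Int_supporting_hyperplane_le) (auto simp: inner_commute)
  moreover have "F \<noteq> {}" using x unfolding F_def by (auto simp: inner_commute)
  moreover have "u \<in> normal_cone Q F"
    unfolding normal_cone_def F_def using x by (auto simp: inner_commute)
  ultimately show ?thesis using Q(2) unfolding normal_fan_def fan_cones_def by blast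
qed

locale complete_simplicial_fan =
  fixes v :: "nat \<Rightarrow> 'a::euclidean_space" and n :: nat and S :: "nat set set"
  assumes simplicial: "simplicial_fan v n S"
    and complete: "\<And>u. \<exists>\<sigma>\<in>S. u \<in> gen_cone v \<sigma>"
begin

lemma cone_subset: "\<sigma> \<in> S \<Longrightarrow> \<sigma> \<subseteq> {..<n}"
  and face_in_fan: "\<sigma> \<in> S \<Longrightarrow> \<tau> \<subseteq> \<sigma> \<Longrightarrow> \<tau> \<in> S"
  and ray_in_fan: "i < n \<Longrightarrow> {i} \<in> S"
  and inj_on_cone: "\<sigma> \<in> S \<Longrightarrow> inj_on v \<sigma>"
  and independent_cone: "\<sigma> \<in> S \<Longrightarrow> independent (v ` \<sigma>)"
  and cones_inter: "\<sigma> \<in> S \<Longrightarrow> \<tau> \<in> S \<Longrightarrow> gen_cone v \<sigma> \<inter> gen_cone v \<tau> = gen_cone v (\<sigma> \<inter> \<tau>)"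
  using simplicial unfolding simplicial_fan_def by auto

lemma finite_cone: "\<sigma> \<in> S \<Longrightarrow> finite \<sigma>"
  using cone_subset finite_subset by blast

lemma finite_fan: "finite S"
proof -
  have "S \<subseteq> Pow {..<n}" using cone_subset by blast
  then show ?thesis by (meson finite_Pow_iff finite_lessThan finite_subset)
qed

lemma fan_nonempty: "S \<noteq> {}"
  using complete by blast

lemma generator_nonzero: "i < n \<Longrightarrow> v i \<noteq> 0"
  using independent_cone[OF ray_in_fan] dependent_zero[of "v ` {i}"] by auto

lemma normalized_generator_inj:
  assumes i: "i < n" and j: "j < n" and eq: "v i /\<^sub>R norm (v i) = v j /\<^sub>R norm (v j)"
  shows "i = j"
proof (rule ccontr)
  assume "i \<noteq> j"
  then have "gen_cone v {i} \<inter> gen_cone v {j} = {0}"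
    using cones_inter[OF ray_in_fan[OF i] ray_in_fan[OF j]] by (simp add: gen_cone_def)
  moreover have "v i = (norm (v i) / norm (v j)) *\<^sub>R v j"
  proof -
    have "v i = norm (v i) *\<^sub>R (v i /\<^sub>R norm (v i))" using generator_nonzero[OF i] by simp
    also have "\<dots> = (norm (v i) / norm (v j)) *\<^sub>R v j" using eq by (simp add: divide_inverse_commute)
    finally show ?thesis .
  qed
  then have "v i \<in> gen_cone v {j}" using gen_coneI[of "{j}" "\<lambda>_. norm (v i) / norm (v j)" v] by simp
  moreover have "v i \<in> gen_cone v {i}" by (simp add: generator_in_gen_cone)
  ultimately show False using generator_nonzero[OF i] by blast
qed

lemma gen_cone_subset_normal_cone:
  assumes "convex Q" and max: "has_cone_maximizers v S Q" and \<sigma>: "\<sigma> \<in> S"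
  shows "\<exists>D\<in>normal_fan Q. gen_cone v \<sigma> \<subseteq> D"
proof -
  obtain x where x: "x \<in> Q" "\<forall>w\<in>gen_cone v \<sigma>. \<forall>y\<in>Q. y \<bullet> w \<le> x \<bullet> w"
    using max \<sigma> unfolding has_cone_maximizers_def by blast
  define u where "u = (\<Sum>i\<in>\<sigma>. 1 *\<^sub>R v i)"
  define F where "F = Q \<inter> {z. u \<bullet> z = x \<bullet> u}"
  have "u \<in> gen_cone v \<sigma>" unfolding u_def by (rule gen_coneI) simp
  then have "F face_of Q" unfolding F_def using x \<open>convex Q\<close>
    by (intro face_of_Int_supporting_hyperplane_le) (auto simp: inner_commute)
  moreover have "F \<noteq> {}" using x unfolding F_def by (auto simp: inner_commute)
  moreover have "gen_cone v \<sigma> \<subseteq> normal_cone Q F"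
  proof
    fix w assume "w \<in> gen_cone v \<sigma>"
    then have "y \<bullet> w \<le> z \<bullet> w" if "z \<in> F" "y \<in> Q" for y z
      using maximizer_of_relint_direction[OF finite_cone[OF \<sigma>] _ x(2), of "\<lambda>_. 1" z w y]
        that unfolding F_def u_def by (auto simp: inner_commute)
    then show "w \<in> normal_cone Q F" unfolding normal_cone_def by blast
  qed
  ultimately show ?thesis unfolding normal_fan_def by blast
qed

text \<open>A direction \<open>u\<close> in a normal cone lies in the relative interior of the cone \<open>\<tau>\<close> of the fan
  spanned by the rays with positive coefficient; that whole cone then belongs to the normal cone.\<close>

lemma normal_cone_covered_by_fan:
  assumes max: "has_cone_maximizers v S Q" and D: "D \<in> normal_fan Q" and u: "u \<in> D"
  shows "u \<in> \<Union>{C \<in> fan_cones v S. C \<subseteq> D}"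
proof -
  obtain F where F: "D = normal_cone Q F" "F face_of Q"
    using D unfolding normal_fan_def by blast
  obtain \<sigma> c where \<sigma>: "\<sigma> \<in> S" "\<forall>i\<in>\<sigma>. 0 \<le> c i" "u = (\<Sum>i\<in>\<sigma>. c i *\<^sub>R v i)"
    using complete[of u] by (auto elim: gen_coneE)
  define \<tau> where "\<tau> = {i\<in>\<sigma>. c i > 0}"
  have \<tau>: "\<tau> \<in> S" using face_in_fan[OF \<sigma>(1)] by (auto simp: \<tau>_def)
  have u_\<tau>: "u = (\<Sum>i\<in>\<tau>. c i *\<^sub>R v i)" unfolding \<sigma>(3) \<tau>_def
    using finite_cone[OF \<sigma>(1)] \<sigma>(2) by (intro sum.mono_neutral_right) auto
  then have u_in: "u \<in> gen_cone v \<tau>" by (auto simp: \<tau>_def intro!: gen_coneI)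
  obtain x where x: "x \<in> Q" "\<forall>w\<in>gen_cone v \<tau>. \<forall>y\<in>Q. y \<bullet> w \<le> x \<bullet> w"
    using max \<tau> unfolding has_cone_maximizers_def by blast
  have "gen_cone v \<tau> \<subseteq> D"
  proof
    fix w assume w: "w \<in> gen_cone v \<tau>"
    have "y \<bullet> w \<le> z \<bullet> w" if z: "z \<in> F" and y: "y \<in> Q" for y z
    proof (rule maximizer_of_relint_direction[OF finite_cone[OF \<tau>] _ x(2) _ _ w y])
      show "\<forall>i\<in>\<tau>. 0 < c i" by (simp add: \<tau>_def)
      show "z \<in> Q" using z F(2) face_of_imp_subset by blast
      show "x \<bullet> (\<Sum>i\<in>\<tau>. c i *\<^sub>R v i) \<le> z \<bullet> (\<Sum>i\<in>\<tau>. c i *\<^sub>R v i)"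
        using u F(1) z x(1) unfolding u_\<tau> normal_cone_def by blast
    qed
    then show "w \<in> D" unfolding F(1) normal_cone_def by blast
  qed
  moreover have "gen_cone v \<tau> \<in> fan_cones v S" using \<tau> by (simp add: fan_cones_def)
  ultimately show ?thesis using u_in by blast
qed

lemma has_cone_maximizers_imp_deformation_cone:
  assumes "polytope Q" "Q \<noteq> {}" and "has_cone_maximizers v S Q"
  shows "Q \<in> deformation_cone v S"
proof -
  have "coarsened_by (normal_fan Q) (fan_cones v S)"
    unfolding coarsened_by_def
  proof (intro conjI ballI)
    fix C assume "C \<in> fan_cones v S"
    then show "\<exists>D\<in>normal_fan Q. C \<subseteq> D"
      using gen_cone_subset_normal_cone[OF polytope_imp_convex[OF assms(1)] assms(3)]
      unfolding fan_cones_def by blast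
  next
    fix D assume "D \<in> normal_fan Q"
    then show "D = \<Union>{C \<in> fan_cones v S. C \<subseteq> D}"
      using normal_cone_covered_by_fan[OF assms(3)] by blast
  qed
  then show ?thesis using assms(1,2) unfolding deformation_cone_def by blast
qed

end

text \<open>\<open>X \<sigma>\<close> is the vertex of a polytope with support numbers \<open>h\<close> whose normal cone contains the
  cone \<open>\<sigma>\<close>.\<close>

definition realizes_support ::
  "(nat \<Rightarrow> 'a::real_inner) \<Rightarrow> nat \<Rightarrow> nat set set \<Rightarrow> (nat \<Rightarrow> real) \<Rightarrow> (nat set \<Rightarrow> 'a) \<Rightarrow> bool" where
  "realizes_support v n S h X \<longleftrightarrow> (\<forall>\<sigma>\<in>S. (\<forall>i\<in>\<sigma>. X \<sigma> \<bullet> v i = h i) \<and> (\<forall>j<n. X \<sigma> \<bullet> v j \<le> h j))"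

context complete_simplicial_fan
begin

lemma realization_maximizes:
  assumes X: "realizes_support v n S h X" and \<sigma>: "\<sigma> \<in> S" and w: "w \<in> gen_cone v \<sigma>"
    and y: "y \<in> convex hull (X ` S)"
  shows "y \<bullet> w \<le> X \<sigma> \<bullet> w"
proof -
  obtain c where c: "\<forall>i\<in>\<sigma>. 0 \<le> c i" "w = (\<Sum>i\<in>\<sigma>. c i *\<^sub>R v i)" using w gen_coneE by blast
  have "X \<tau> \<bullet> w \<le> X \<sigma> \<bullet> w" if \<tau>: "\<tau> \<in> S" for \<tau>
  proof -
    have "X \<tau> \<bullet> w = (\<Sum>i\<in>\<sigma>. c i * (X \<tau> \<bullet> v i))" unfolding c(2) by (simp add: inner_sum_right)
    also have "\<dots> \<le> (\<Sum>i\<in>\<sigma>. c i * (X \<sigma> \<bullet> v i))"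
      using X \<sigma> \<tau> c(1) cone_subset[OF \<sigma>] unfolding realizes_support_def
      by (intro sum_mono mult_left_mono) auto
    also have "\<dots> = X \<sigma> \<bullet> w" unfolding c(2) by (simp add: inner_sum_right)
    finally show ?thesis .
  qed
  then have "convex hull (X ` S) \<subseteq> {y. y \<bullet> w \<le> X \<sigma> \<bullet> w}"
    using convex_halfspace_le[of w "X \<sigma> \<bullet> w"] by (intro hull_minimal) (auto simp: inner_commute)
  then show ?thesis using y by auto
qed

lemma realization_in_deformation_cone:
  assumes "realizes_support v n S h X"
  shows "convex hull (X ` S) \<in> deformation_cone v S"
proof (rule has_cone_maximizers_imp_deformation_cone)
  show "polytope (convex hull (X ` S))" using finite_fan by (simp add: polytope_convex_hull)
  show "convex hull (X ` S) \<noteq> {}" using fan_nonempty by simp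
  show "has_cone_maximizers v S (convex hull (X ` S))"
    unfolding has_cone_maximizers_def using realization_maximizes[OF assms] by (blast intro: hull_inc)
qed

lemma supp_realization:
  assumes X: "realizes_support v n S h X" and j: "j < n"
  shows "supp (convex hull (X ` S)) (v j) = h j"
proof -
  have "supp (convex hull (X ` S)) (v j) = X {j} \<bullet> v j"
    using realization_maximizes[OF X ray_in_fan[OF j]] ray_in_fan[OF j]
    by (intro supp_eq_inner_maximizer) (auto intro: hull_inc generator_in_gen_cone)
  then show ?thesis using X ray_in_fan[OF j] unfolding realizes_support_def by auto
qed

lemma deformation_cone_realizable:
  assumes Q: "Q \<in> deformation_cone v S"
  shows "\<exists>X. realizes_support v n S (\<lambda>j. supp Q (v j)) X"
proof -
  obtain X where X: "\<forall>\<sigma>\<in>S. X \<sigma> \<in> Q \<and> (\<forall>w\<in>gen_cone v \<sigma>. \<forall>y\<in>Q. y \<bullet> w \<le> X \<sigma> \<bullet> w)"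
    using deformation_cone_has_cone_maximizers[OF Q] unfolding has_cone_maximizers_def by metis
  have "bounded Q" using deformation_cone_compact[OF Q] compact_imp_bounded by blast
  have "realizes_support v n S (\<lambda>j. supp Q (v j)) X"
    unfolding realizes_support_def
  proof (intro ballI conjI allI impI)
    fix \<sigma> i assume "\<sigma> \<in> S" "i \<in> \<sigma>"
    then show "X \<sigma> \<bullet> v i = supp Q (v i)"
      using X generator_in_gen_cone[OF finite_cone, of \<sigma> i v] supp_eq_inner_maximizer by metis
  next
    fix \<sigma> j assume "\<sigma> \<in> S"
    then show "X \<sigma> \<bullet> v j \<le> supp Q (v j)" using X inner_le_supp[OF \<open>bounded Q\<close>] by blast
  qed
  then show ?thesis by blast
qed

lemma supp_normalized_generator:
  assumes Q: "Q \<in> deformation_cone v S" and i: "i < n"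
  shows "supp Q (v i /\<^sub>R norm (v i)) = supp Q (v i) / norm (v i)"
  using supp_gen_cone_sum[OF deformation_cone_has_cone_maximizers[OF Q] ray_in_fan[OF i],
      of "\<lambda>_. inverse (norm (v i))"]
  by (simp add: divide_inverse_commute mult.commute)

lemma zero_in_deformation_cone: "{0} \<in> deformation_cone v S"
  by (rule has_cone_maximizers_imp_deformation_cone) (auto simp: has_cone_maximizers_def polytope_sing)

lemma uniform_coefficient_bound:
  "\<exists>K\<ge>0. \<forall>\<sigma>\<in>S. \<forall>c. \<forall>i\<in>\<sigma>. \<bar>c i\<bar> \<le> K * norm (\<Sum>j\<in>\<sigma>. c j *\<^sub>R v j)"
proof -
  define I where "I = Sigma S (\<lambda>\<sigma>. \<sigma>)"
  have "finite I" unfolding I_def using finite_fan finite_cone by auto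
  have "\<forall>p\<in>I. \<exists>K>0. \<forall>c. \<bar>c (snd p)\<bar> \<le> K * norm (\<Sum>j\<in>fst p. c j *\<^sub>R v j)"
    using independent_coefficient_bound[OF finite_cone inj_on_cone independent_cone]
    unfolding I_def by auto
  then obtain Kf where
    Kf: "\<forall>p\<in>I. Kf p > 0 \<and> (\<forall>c. \<bar>c (snd p)\<bar> \<le> Kf p * norm (\<Sum>j\<in>fst p. c j *\<^sub>R v j))"
    by metis
  have "\<bar>c i\<bar> \<le> (\<Sum>p\<in>I. Kf p) * norm (\<Sum>j\<in>\<sigma>. c j *\<^sub>R v j)" if "\<sigma> \<in> S" "i \<in> \<sigma>" for \<sigma> c i
  proof -
    have p: "(\<sigma>, i) \<in> I" unfolding I_def using that by auto
    have "Kf (\<sigma>, i) \<le> (\<Sum>p\<in>I. Kf p)"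
      using \<open>finite I\<close> p Kf by (intro member_le_sum) (auto simp: less_imp_le)
    then have "Kf (\<sigma>, i) * norm (\<Sum>j\<in>\<sigma>. c j *\<^sub>R v j) \<le> (\<Sum>p\<in>I. Kf p) * norm (\<Sum>j\<in>\<sigma>. c j *\<^sub>R v j)"
      by (simp add: mult_right_mono)
    moreover have "\<bar>c i\<bar> \<le> Kf (\<sigma>, i) * norm (\<Sum>j\<in>\<sigma>. c j *\<^sub>R v j)" using Kf p by auto
    ultimately show ?thesis by linarith
  qed
  moreover have "(\<Sum>p\<in>I. Kf p) \<ge> 0" using Kf by (simp add: sum_nonneg less_imp_le)
  ultimately show ?thesis by blast
qed

text \<open>Support functions in the deformation cone are linear on each cone of the fan, so their
  differences are controlled by the differences on the rays.\<close>

lemma supp_diff_le_ray_diff: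
  "\<exists>K\<ge>0. \<forall>Q\<in>deformation_cone v S. \<forall>P\<in>deformation_cone v S. \<forall>t\<ge>0. \<forall>u.
     (\<forall>j<n. \<bar>supp Q (v j) - supp P (v j)\<bar> \<le> t) \<longrightarrow> \<bar>supp Q u - supp P u\<bar> \<le> K * t * norm u"
proof -
  obtain K where K: "K \<ge> 0" "\<forall>\<sigma>\<in>S. \<forall>c. \<forall>i\<in>\<sigma>. \<bar>c i\<bar> \<le> K * norm (\<Sum>j\<in>\<sigma>. c j *\<^sub>R v j)"
    using uniform_coefficient_bound by blast
  have "\<bar>supp Q u - supp P u\<bar> \<le> real n * K * t * norm u"
    if Q: "Q \<in> deformation_cone v S" and P: "P \<in> deformation_cone v S" and t: "t \<ge> 0"
      and d: "\<forall>j<n. \<bar>supp Q (v j) - supp P (v j)\<bar> \<le> t" for Q P t u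
  proof -
    obtain \<sigma> c where \<sigma>: "\<sigma> \<in> S" "\<forall>i\<in>\<sigma>. 0 \<le> c i" "u = (\<Sum>i\<in>\<sigma>. c i *\<^sub>R v i)"
      using complete[of u] by (auto elim: gen_coneE)
    have linear: "supp R u = (\<Sum>i\<in>\<sigma>. c i * supp R (v i))" if "R \<in> deformation_cone v S" for R
      unfolding \<sigma>(3) using supp_gen_cone_sum[OF deformation_cone_has_cone_maximizers[OF that]
          \<sigma>(1) finite_cone[OF \<sigma>(1)] \<sigma>(2)] .
    have "\<bar>supp Q u - supp P u\<bar> = \<bar>\<Sum>i\<in>\<sigma>. c i * (supp Q (v i) - supp P (v i))\<bar>"
      unfolding linear[OF Q] linear[OF P] by (simp add: sum_subtractf right_diff_distrib)
    also have "\<dots> \<le> (\<Sum>i\<in>\<sigma>. K * norm u * t)"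
    proof (intro order.trans[OF sum_abs] sum_mono)
      fix i assume i: "i \<in> \<sigma>"
      have "\<bar>c i\<bar> \<le> K * norm u" using K(2) \<sigma> i by blast
      moreover have "\<bar>supp Q (v i) - supp P (v i)\<bar> \<le> t" using d cone_subset[OF \<sigma>(1)] i by blast
      ultimately show "\<bar>c i * (supp Q (v i) - supp P (v i))\<bar> \<le> K * norm u * t"
        unfolding abs_mult using K(1) by (intro mult_mono) auto
    qed
    also have "\<dots> \<le> real n * (K * norm u * t)"
      using card_mono[OF _ cone_subset[OF \<sigma>(1)]] K(1) t by (simp add: mult_right_mono)
    finally show ?thesis by (simp add: algebra_simps)
  qed
  then show ?thesis using K(1) by (intro exI[of _ "real n * K"]) auto
qed

lemma deformation_cone_hausdist_le:
  "\<exists>C. \<forall>Q\<in>deformation_cone v S. \<forall>P\<in>deformation_cone v S. \<forall>t\<ge>0.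
     (\<forall>j<n. \<bar>supp Q (v j) - supp P (v j)\<bar> \<le> t) \<longrightarrow> hausdist Q P \<le> C * t"
proof -
  obtain K where K: "K \<ge> 0" "\<forall>Q\<in>deformation_cone v S. \<forall>P\<in>deformation_cone v S. \<forall>t\<ge>0. \<forall>u.
     (\<forall>j<n. \<bar>supp Q (v j) - supp P (v j)\<bar> \<le> t) \<longrightarrow> \<bar>supp Q u - supp P u\<bar> \<le> K * t * norm u"
    using supp_diff_le_ray_diff by blast
  have "hausdist Q P \<le> K * t"
    if Q: "Q \<in> deformation_cone v S" and P: "P \<in> deformation_cone v S" and t: "t \<ge> 0"
      and d: "\<forall>j<n. \<bar>supp Q (v j) - supp P (v j)\<bar> \<le> t" for Q P t
  proof (rule hausdist_le_of_supp_diff_le)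
    show "\<bar>supp Q u - supp P u\<bar> \<le> K * t" if "norm u = 1" for u
    proof -
      have "\<bar>supp Q u - supp P u\<bar> \<le> K * t * norm u" using K(2) Q P t d by blast
      then show ?thesis using that by simp
    qed
  qed (use Q P t K(1) in \<open>auto simp: deformation_cone_compact deformation_cone_nonempty
        polytope_imp_convex deformation_cone_polytope\<close>)
  then show ?thesis by blast
qed

end

section \<open>Fourier--Motzkin elimination\<close>

text \<open>A system of linear inequalities \<open>c \<bullet> z \<le> b\<close> in the variables \<open>V\<close> is a set of pairs \<open>(c, b)\<close>.\<close>

definition lin_form :: "'v set \<Rightarrow> ('v \<Rightarrow> real) \<Rightarrow> ('v \<Rightarrow> real) \<Rightarrow> real" where
  "lin_form V c z = (\<Sum>x\<in>V. c x * z x)"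

definition satisfies :: "'v set \<Rightarrow> ('v \<Rightarrow> real) \<Rightarrow> (('v \<Rightarrow> real) \<times> real) set \<Rightarrow> bool" where
  "satisfies V z C \<longleftrightarrow> (\<forall>p\<in>C. lin_form V (fst p) z \<le> snd p)"

definition fm_combine ::
  "'v \<Rightarrow> ('v \<Rightarrow> real) \<times> real \<Rightarrow> ('v \<Rightarrow> real) \<times> real \<Rightarrow> ('v \<Rightarrow> real) \<times> real" where
  "fm_combine k p q =
     ((\<lambda>x. (- fst q k) * fst p x + fst p k * fst q x), (- fst q k) * snd p + fst p k * snd q)"

definition fm_eliminate :: "'v \<Rightarrow> (('v \<Rightarrow> real) \<times> real) set \<Rightarrow> (('v \<Rightarrow> real) \<times> real) set" where
  "fm_eliminate k C = {p\<in>C. fst p k = 0} \<union>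
     (\<lambda>(p, q). fm_combine k p q) ` {(p, q). p \<in> C \<and> q \<in> C \<and> fst p k > 0 \<and> fst q k < 0}"

fun fm_eliminate_all :: "'v list \<Rightarrow> (('v \<Rightarrow> real) \<times> real) set \<Rightarrow> (('v \<Rightarrow> real) \<times> real) set" where
  "fm_eliminate_all [] C = C"
| "fm_eliminate_all (k # ks) C = fm_eliminate_all ks (fm_eliminate k C)"

lemma lin_form_cong: "(\<And>x. x \<in> V \<Longrightarrow> z x = z' x) \<Longrightarrow> lin_form V c z = lin_form V c z'"
  unfolding lin_form_def by (intro sum.cong) auto

lemma lin_form_split:
  assumes "finite V" "k \<in> V"
  shows "lin_form V c z = lin_form V c (z(k := 0)) + c k * z k"
proof -
  have "lin_form V c z = c k * z k + (\<Sum>x\<in>V-{k}. c x * z x)"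
    unfolding lin_form_def using assms by (simp add: sum.remove)
  moreover have "lin_form V c (z(k := 0)) = (\<Sum>x\<in>V-{k}. c x * z x)"
    unfolding lin_form_def using assms by (simp add: sum.remove)
  ultimately show ?thesis by simp
qed

lemma lin_form_update_irrelevant:
  "finite V \<Longrightarrow> k \<in> V \<Longrightarrow> c k = 0 \<Longrightarrow> lin_form V c (z(k := t)) = lin_form V c z"
  using lin_form_split[of V k c z] lin_form_split[of V k c "z(k := t)"] by simp

lemma lin_form_fm_combine:
  "lin_form V (fst (fm_combine k p q)) z = (- fst q k) * lin_form V (fst p) z + fst p k * lin_form V (fst q) z"
proof -
  have "lin_form V (fst (fm_combine k p q)) z
      = (\<Sum>x\<in>V. (- fst q k) * (fst p x * z x) + fst p k * (fst q x * z x))"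
    unfolding lin_form_def fm_combine_def by (intro sum.cong) (auto simp: algebra_simps)
  then show ?thesis unfolding lin_form_def by (simp only: sum.distrib sum_distrib_left)
qed

lemma fm_combine_eliminates: "fst (fm_combine k p q) k = 0"
  unfolding fm_combine_def by simp

lemma finite_fm_eliminate: "finite C \<Longrightarrow> finite (fm_eliminate k C)"
proof -
  assume C: "finite C"
  have "{(p, q). p \<in> C \<and> q \<in> C \<and> fst p k > 0 \<and> fst q k < 0} \<subseteq> C \<times> C" by auto
  then have "finite {(p, q). p \<in> C \<and> q \<in> C \<and> fst p k > 0 \<and> fst q k < 0}"
    using C by (meson finite_SigmaI finite_subset)
  then show ?thesis unfolding fm_eliminate_def using C by auto
qed

lemma finite_fm_eliminate_all: "finite C \<Longrightarrow> finite (fm_eliminate_all ks C)"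
  by (induction ks arbitrary: C) (auto simp: finite_fm_eliminate)

lemma fm_eliminate_sound:
  assumes V: "finite V" "k \<in> V" and z: "satisfies V (z(k := t)) C"
  shows "satisfies V z (fm_eliminate k C)"
  unfolding satisfies_def
proof
  fix p assume p: "p \<in> fm_eliminate k C"
  have irrelevant: "lin_form V (fst p) z = lin_form V (fst p) (z(k := t))" if "fst p k = 0"
    using lin_form_update_irrelevant[of V k "fst p" z t] V that by simp
  show "lin_form V (fst p) z \<le> snd p"
  proof (cases "p \<in> C \<and> fst p k = 0")
    case True
    then show ?thesis using z irrelevant unfolding satisfies_def by auto
  next
    case False
    then obtain a b where ab: "a \<in> C" "b \<in> C" "fst a k > 0" "fst b k < 0" "p = fm_combine k a b"
      using p unfolding fm_eliminate_def by auto
    have "lin_form V (fst p) z = lin_form V (fst p) (z(k := t))"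
      using irrelevant fm_combine_eliminates[of k a b] ab(5) by simp
    also have "\<dots> = (- fst b k) * lin_form V (fst a) (z(k := t)) + fst a k * lin_form V (fst b) (z(k := t))"
      unfolding ab(5) by (rule lin_form_fm_combine)
    also have "\<dots> \<le> (- fst b k) * snd a + fst a k * snd b"
      using z ab unfolding satisfies_def by (intro add_mono mult_left_mono) auto
    also have "\<dots> = snd p" using ab unfolding fm_combine_def by simp
    finally show ?thesis .
  qed
qed

definition fm_bound :: "'v set \<Rightarrow> ('v \<Rightarrow> real) \<Rightarrow> 'v \<Rightarrow> ('v \<Rightarrow> real) \<times> real \<Rightarrow> real" where
  "fm_bound V z k p = (snd p - lin_form V (fst p) (z(k := 0))) / fst p k"

lemma lin_form_update_le_iff:
  assumes "finite V" "k \<in> V"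
  shows "0 < fst p k \<Longrightarrow> lin_form V (fst p) (z(k := t)) \<le> snd p \<longleftrightarrow> t \<le> fm_bound V z k p"
    and "fst p k < 0 \<Longrightarrow> lin_form V (fst p) (z(k := t)) \<le> snd p \<longleftrightarrow> fm_bound V z k p \<le> t"
  using lin_form_split[OF assms, of "fst p" "z(k := t)"]
  by (simp_all add: fm_bound_def le_divide_eq divide_le_eq mult.commute le_diff_eq add.commute)

text \<open>The combinations kept by the elimination say that every lower bound lies below every upper
  bound.\<close>

lemma fm_bound_lower_le_upper:
  assumes V: "finite V" "k \<in> V" and z: "satisfies V z (fm_eliminate k C)"
    and p: "p \<in> C" "fst p k > 0" and q: "q \<in> C" "fst q k < 0"
  shows "fm_bound V z k q \<le> fm_bound V z k p"
proof -
  have "fm_combine k p q \<in> fm_eliminate k C" using p q unfolding fm_eliminate_def by auto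
  then have "lin_form V (fst (fm_combine k p q)) z \<le> snd (fm_combine k p q)"
    using z unfolding satisfies_def by blast
  then have "lin_form V (fst (fm_combine k p q)) (z(k := 0)) \<le> snd (fm_combine k p q)"
    using lin_form_update_irrelevant[of V k "fst (fm_combine k p q)" z 0, OF V fm_combine_eliminates]
    by simp
  then have "0 \<le> (- fst q k) * (snd p - lin_form V (fst p) (z(k := 0)))
      + fst p k * (snd q - lin_form V (fst q) (z(k := 0)))"
    unfolding lin_form_fm_combine by (simp add: fm_combine_def algebra_simps)
  then show ?thesis unfolding fm_bound_def using p(2) q(2)
    by (simp add: divide_simps) (smt (verit) mult.commute)
qed

lemma fm_eliminate_complete:
  assumes V: "finite V" "k \<in> V" and C: "finite C" and z: "satisfies V z (fm_eliminate k C)"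
  shows "\<exists>t. satisfies V (z(k := t)) C"
proof -
  define Pos where "Pos = {p\<in>C. fst p k > 0}"
  define Neg where "Neg = {p\<in>C. fst p k < 0}"
  have fin: "finite Pos" "finite Neg" using C unfolding Pos_def Neg_def by auto
  define t where "t = (if Neg = {} then (if Pos = {} then 0 else Min (fm_bound V z k ` Pos))
    else Max (fm_bound V z k ` Neg))"
  have t_upper: "t \<le> fm_bound V z k p" if p: "p \<in> Pos" for p
  proof (cases "Neg = {}")
    case True then show ?thesis unfolding t_def using p fin by auto
  next
    case False
    then have "t \<in> fm_bound V z k ` Neg" unfolding t_def using fin by simp
    then obtain q where "q \<in> C" "fst q k < 0" "t = fm_bound V z k q" unfolding Neg_def by blast
    then show ?thesis using fm_bound_lower_le_upper[OF V z, of p q] p unfolding Pos_def by simp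
  qed
  have t_lower: "fm_bound V z k q \<le> t" if "q \<in> Neg" for q
    using that fin unfolding t_def by auto
  have "lin_form V (fst p) (z(k := t)) \<le> snd p" if p: "p \<in> C" for p
  proof -
    consider (zero) "fst p k = 0" | (pos) "fst p k > 0" | (neg) "fst p k < 0" by linarith
    then show ?thesis
    proof cases
      case zero
      then have "p \<in> fm_eliminate k C" using p unfolding fm_eliminate_def by auto
      then have "lin_form V (fst p) z \<le> snd p" using z unfolding satisfies_def by blast
      then show ?thesis using lin_form_update_irrelevant[of V k "fst p" z t, OF V zero] by simp
    next
      case pos
      then show ?thesis using t_upper p lin_form_update_le_iff(1)[OF V] unfolding Pos_def by blast
    next
      case neg
      then show ?thesis using t_lower p lin_form_update_le_iff(2)[OF V] unfolding Neg_def by blast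
    qed
  qed
  then show ?thesis unfolding satisfies_def by blast
qed

lemma fm_eliminate_all_correct:
  assumes V: "finite V" and C: "finite C" and ks: "set ks \<subseteq> V"
  shows "(\<exists>w. (\<forall>x. x \<notin> set ks \<longrightarrow> w x = z x) \<and> satisfies V w C) \<longleftrightarrow>
    satisfies V z (fm_eliminate_all ks C)"
  using C ks
proof (induction ks arbitrary: C z)
  case Nil
  have "(\<forall>x. w x = z x) \<longleftrightarrow> w = z" for w :: "'a \<Rightarrow> real" by auto
  then show ?case by simp
next
  case (Cons k ks)
  have k: "k \<in> V" using Cons.prems by auto
  have IH: "satisfies V z (fm_eliminate_all (k # ks) C) \<longleftrightarrow>
      (\<exists>w. (\<forall>x. x \<notin> set ks \<longrightarrow> w x = z x) \<and> satisfies V w (fm_eliminate k C))"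
  proof -
    have "finite (fm_eliminate k C)" using Cons.prems(1) by (rule finite_fm_eliminate)
    then show ?thesis using Cons.IH[of "fm_eliminate k C" z] Cons.prems(2) by simp
  qed
  have step: "satisfies V w (fm_eliminate k C) \<longleftrightarrow> (\<exists>t. satisfies V (w(k := t)) C)" for w
    using fm_eliminate_sound[OF V k] fm_eliminate_complete[OF V k Cons.prems(1)] by blast
  show ?case
  proof
    assume "\<exists>w. (\<forall>x. x \<notin> set (k # ks) \<longrightarrow> w x = z x) \<and> satisfies V w C"
    then obtain w where w: "\<forall>x. x \<notin> set (k # ks) \<longrightarrow> w x = z x" "satisfies V w C" by blast
    have "\<forall>x. x \<notin> set ks \<longrightarrow> (w(k := z k)) x = z x" using w by auto
    moreover have "satisfies V ((w(k := z k))(k := w k)) C" using w by simp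
    ultimately show "satisfies V z (fm_eliminate_all (k # ks) C)" using IH step by blast
  next
    assume "satisfies V z (fm_eliminate_all (k # ks) C)"
    then obtain w t where "\<forall>x. x \<notin> set ks \<longrightarrow> w x = z x" "satisfies V (w(k := t)) C"
      using IH step by blast
    then show "\<exists>w. (\<forall>x. x \<notin> set (k # ks) \<longrightarrow> w x = z x) \<and> satisfies V w C"
      by (intro exI[of _ "w(k := t)"]) auto
  qed
qed

lemma closed_satisfies: "finite C \<Longrightarrow> closed {z::'v \<Rightarrow> real. satisfies V z C}"
proof -
  assume "finite C"
  have "{z::'v \<Rightarrow> real. satisfies V z C} = (\<Inter>p\<in>C. {z. lin_form V (fst p) z \<le> snd p})"
    unfolding satisfies_def by auto
  moreover have "closed {z::'v \<Rightarrow> real. lin_form V (fst p) z \<le> snd p}" for p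
    unfolding lin_form_def by (intro closed_Collect_le continuous_intros) auto
  ultimately show ?thesis using \<open>finite C\<close> by auto
qed

lemma compact_box_supported_on:
  "compact {z::'v \<Rightarrow> real. \<forall>x. (x \<in> W \<longrightarrow> \<bar>z x\<bar> \<le> R) \<and> (x \<notin> W \<longrightarrow> z x = 0)}"
proof -
  define B where "B x = (if x \<in> W then {-R..R} else {0::real})" for x
  have "{z::'v \<Rightarrow> real. \<forall>x. (x \<in> W \<longrightarrow> \<bar>z x\<bar> \<le> R) \<and> (x \<notin> W \<longrightarrow> z x = 0)} = PiE UNIV B"
    unfolding B_def PiE_def Pi_def by (auto simp: abs_le_iff)
  moreover have "compactin (product_topology (\<lambda>i. euclidean) UNIV) (PiE UNIV B)"
    unfolding compactin_PiE B_def by auto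
  ultimately show ?thesis by (simp add: euclidean_product_topology)
qed

lemma polyhedron_projection:
  assumes V: "finite V" and C: "finite C" and W: "W \<subseteq> V"
  obtains C' where "finite C'"
    and "\<And>z. satisfies V z C' \<longleftrightarrow> (\<exists>w. (\<forall>x\<in>W. w x = z x) \<and> satisfies V w C)"
proof -
  obtain ks where ks: "set ks = V - W" using V finite_list by (metis finite_Diff)
  have "satisfies V z (fm_eliminate_all ks C) \<longleftrightarrow> (\<exists>w. (\<forall>x\<in>W. w x = z x) \<and> satisfies V w C)" for z
  proof -
    have "(\<exists>w. (\<forall>x\<in>W. w x = z x) \<and> satisfies V w C) \<longleftrightarrow>
        (\<exists>w. (\<forall>x. x \<notin> set ks \<longrightarrow> w x = z x) \<and> satisfies V w C)"
    proof
      assume "\<exists>w. (\<forall>x\<in>W. w x = z x) \<and> satisfies V w C"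
      then obtain w where w: "\<forall>x\<in>W. w x = z x" "satisfies V w C" by blast
      define w' where "w' x = (if x \<in> set ks then w x else z x)" for x
      have "lin_form V c w' = lin_form V c w" for c
        using w(1) ks by (intro lin_form_cong) (auto simp: w'_def)
      then show "\<exists>w. (\<forall>x. x \<notin> set ks \<longrightarrow> w x = z x) \<and> satisfies V w C"
        using w(2) unfolding satisfies_def by (intro exI[of _ w']) (auto simp: w'_def)
    qed (use ks in auto)
    also have "\<dots> \<longleftrightarrow> satisfies V z (fm_eliminate_all ks C)"
      using fm_eliminate_all_correct[OF V C, of ks z] ks by blast
    finally show ?thesis by simp
  qed
  then show ?thesis using that finite_fm_eliminate_all[OF C] by blast
qed

text \<open>Restricted to the bounded sublevel sets of the objective, the projection of the polyhedron
  onto the \<open>W\<close>-coordinates is compact.\<close>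

lemma satisfies_attains_min:
  fixes \<Psi> :: "('v \<Rightarrow> real) \<Rightarrow> real"
  assumes V: "finite V" and C: "finite C" and W: "W \<subseteq> V"
    and depends: "\<And>z z'. (\<forall>x\<in>W. z x = z' x) \<Longrightarrow> \<Psi> z = \<Psi> z'"
    and cont: "continuous_on UNIV \<Psi>"
    and coercive: "\<And>M. \<exists>R. \<forall>z. \<Psi> z \<le> M \<longrightarrow> (\<forall>x\<in>W. \<bar>z x\<bar> \<le> R)"
    and feasible: "satisfies V z0 C"
  shows "\<exists>z. satisfies V z C \<and> (\<forall>z'. satisfies V z' C \<longrightarrow> \<Psi> z \<le> \<Psi> z')"
proof -
  obtain C' where C': "finite C'"
    and projection: "\<And>z. satisfies V z C' \<longleftrightarrow> (\<exists>w. (\<forall>x\<in>W. w x = z x) \<and> satisfies V w C)"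
    using polyhedron_projection[OF V C W] by blast
  define restrict where "restrict z = (\<lambda>x. if x \<in> W then z x else 0)" for z :: "'v \<Rightarrow> real"
  have restrict_feasible: "satisfies V (restrict z) C'" if "satisfies V z C" for z
    unfolding projection using that by (auto simp: restrict_def)
  have \<Psi>_restrict: "\<Psi> (restrict z) = \<Psi> z" for z by (rule depends) (auto simp: restrict_def)
  obtain R where R: "\<forall>z. \<Psi> z \<le> \<Psi> z0 \<longrightarrow> (\<forall>x\<in>W. \<bar>z x\<bar> \<le> R)" using coercive by blast
  define T where "T = {z. \<forall>x. (x \<in> W \<longrightarrow> \<bar>z x\<bar> \<le> R) \<and> (x \<notin> W \<longrightarrow> z x = 0)}
    \<inter> {z. satisfies V z C'} \<inter> {z. \<Psi> z \<le> \<Psi> z0}"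
  have "compact T" unfolding T_def
    using compact_box_supported_on closed_satisfies[OF C'] closed_Collect_le[OF cont continuous_on_const]
    by (intro compact_Int_closed) auto
  have in_T: "restrict z \<in> T" if "satisfies V z C" "\<Psi> z \<le> \<Psi> z0" for z
    using that restrict_feasible R \<Psi>_restrict unfolding T_def by (auto simp: restrict_def)
  then have "T \<noteq> {}" using feasible by blast
  then obtain zm where zm: "zm \<in> T" "\<forall>y\<in>T. \<Psi> zm \<le> \<Psi> y"
    using continuous_attains_inf[OF \<open>compact T\<close> _ continuous_on_subset[OF cont]] by blast
  obtain w where w: "\<forall>x\<in>W. w x = zm x" "satisfies V w C"
    using zm(1) projection unfolding T_def by blast
  have "\<Psi> w = \<Psi> zm" using w(1) by (intro depends) auto
  have "\<Psi> w \<le> \<Psi> z'" if z': "satisfies V z' C" for z'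
  proof (cases "\<Psi> z' \<le> \<Psi> z0")
    case True
    then show ?thesis using in_T[OF z' True] zm(2) \<open>\<Psi> w = \<Psi> zm\<close> \<Psi>_restrict by metis
  next
    case False
    then show ?thesis using zm(1) \<open>\<Psi> w = \<Psi> zm\<close> unfolding T_def by auto
  qed
  then show ?thesis using w(2) by blast
qed

section \<open>Existence of least-squares estimates\<close>

text \<open>Support numbers \<open>h\<close> and vertices \<open>X\<close> are encoded as one real vector: \<open>Inl j\<close> holds \<open>h j\<close>
  and \<open>Inr (\<sigma>, b)\<close> the \<open>b\<close>-coordinate of \<open>X \<sigma>\<close>. The row \<open>support_row v \<sigma> j s\<close> expresses
  \<open>s * (X \<sigma> \<bullet> v j - h j) \<le> 0\<close>.\<close>

definition support_vars :: "nat \<Rightarrow> nat set set \<Rightarrow> (nat + nat set \<times> 'a::euclidean_space) set" where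
  "support_vars n S = Inl ` {..<n} \<union> Inr ` (S \<times> Basis)"

definition vertex_of :: "(nat + nat set \<times> 'a::euclidean_space \<Rightarrow> real) \<Rightarrow> nat set \<Rightarrow> 'a" where
  "vertex_of z \<sigma> = (\<Sum>b\<in>Basis. z (Inr (\<sigma>, b)) *\<^sub>R b)"

definition encode_support ::
  "(nat \<Rightarrow> real) \<Rightarrow> (nat set \<Rightarrow> 'a::euclidean_space) \<Rightarrow> nat + nat set \<times> 'a \<Rightarrow> real" where
  "encode_support h X = (\<lambda>x. case x of Inl j \<Rightarrow> h j | Inr (\<sigma>, b) \<Rightarrow> X \<sigma> \<bullet> b)"

definition support_row ::
  "(nat \<Rightarrow> 'a::euclidean_space) \<Rightarrow> nat set \<Rightarrow> nat \<Rightarrow> real \<Rightarrow> nat + nat set \<times> 'a \<Rightarrow> real" where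
  "support_row v \<sigma> j s = (\<lambda>x. case x of
     Inl j' \<Rightarrow> if j' = j then - s else 0
   | Inr (\<sigma>', b) \<Rightarrow> if \<sigma>' = \<sigma> then s * (v j \<bullet> b) else 0)"

definition support_system ::
  "(nat \<Rightarrow> 'a::euclidean_space) \<Rightarrow> nat \<Rightarrow> nat set set \<Rightarrow> ((nat + nat set \<times> 'a \<Rightarrow> real) \<times> real) set" where
  "support_system v n S = (\<lambda>(\<sigma>, j). (support_row v \<sigma> j 1, 0)) ` (S \<times> {..<n})
     \<union> (\<lambda>(\<sigma>, j). (support_row v \<sigma> j (-1), 0)) ` Sigma S (\<lambda>\<sigma>. \<sigma>)"

lemma encode_support_Inl [simp]: "encode_support h X (Inl j) = h j"
  by (simp add: encode_support_def)

lemma vertex_of_encode_support [simp]: "vertex_of (encode_support h X) = X"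
  by (simp add: fun_eq_iff vertex_of_def encode_support_def euclidean_representation)

lemma lin_form_support_row:
  fixes v :: "nat \<Rightarrow> 'a::euclidean_space"
  assumes S: "finite S" and \<sigma>: "\<sigma> \<in> S" and j: "j < n"
  shows "lin_form (support_vars n S) (support_row v \<sigma> j s) z = s * (vertex_of z \<sigma> \<bullet> v j - z (Inl j))"
proof -
  have "lin_form (support_vars n S) (support_row v \<sigma> j s) z
      = (\<Sum>i<n. support_row v \<sigma> j s (Inl i) * z (Inl i))
        + (\<Sum>p\<in>S \<times> (Basis::'a set). support_row v \<sigma> j s (Inr p) * z (Inr p))"
    unfolding lin_form_def support_vars_def using S
    by (subst sum.union_disjoint) (auto simp: sum.reindex)
  also have "(\<Sum>i<n. support_row v \<sigma> j s (Inl i) * z (Inl i)) = - s * z (Inl j)"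
    using j by (simp add: support_row_def if_distrib[of "\<lambda>a. a * _"] cong: if_cong)
  also have "(\<Sum>p\<in>S \<times> (Basis::'a set). support_row v \<sigma> j s (Inr p) * z (Inr p))
      = (\<Sum>\<sigma>'\<in>S. if \<sigma>' = \<sigma> then (\<Sum>b\<in>(Basis::'a set). s * (v j \<bullet> b) * z (Inr (\<sigma>, b))) else 0)"
  proof -
    have "(\<Sum>p\<in>S \<times> (Basis::'a set). support_row v \<sigma> j s (Inr p) * z (Inr p))
        = (\<Sum>\<sigma>'\<in>S. \<Sum>b\<in>(Basis::'a set). support_row v \<sigma> j s (Inr (\<sigma>', b)) * z (Inr (\<sigma>', b)))"
      by (simp add: sum.cartesian_product case_prod_unfold)
    also have "\<dots> = (\<Sum>\<sigma>'\<in>S. if \<sigma>' = \<sigma> then (\<Sum>b\<in>(Basis::'a set). s * (v j \<bullet> b) * z (Inr (\<sigma>, b))) else 0)"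
      by (intro sum.cong) (auto simp: support_row_def)
    finally show ?thesis .
  qed
  also have "\<dots> = s * (vertex_of z \<sigma> \<bullet> v j)"
  proof -
    have "vertex_of z \<sigma> \<bullet> v j = (\<Sum>b\<in>Basis. z (Inr (\<sigma>, b)) * (v j \<bullet> b))"
      unfolding vertex_of_def inner_sum_left inner_scaleR_left by (simp add: inner_commute)
    then show ?thesis using S \<sigma> by (simp add: sum_distrib_left algebra_simps)
  qed
  finally show ?thesis by (simp add: algebra_simps)
qed

context complete_simplicial_fan
begin

lemma finite_support_vars: "finite (support_vars n S)"
  unfolding support_vars_def using finite_fan by simp

lemma finite_support_system: "finite (support_system v n S)"
  unfolding support_system_def using finite_fan finite_cone by auto

lemma satisfies_support_system_iff:
  "satisfies (support_vars n S) z (support_system v n S) \<longleftrightarrow>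
    realizes_support v n S (\<lambda>j. z (Inl j)) (vertex_of z)"
proof -
  have row: "lin_form (support_vars n S) (support_row v \<sigma> j s) z = s * (vertex_of z \<sigma> \<bullet> v j - z (Inl j))"
    if "\<sigma> \<in> S" "j < n" for \<sigma> j s
    using lin_form_support_row[OF finite_fan that] .
  have row_bounds:
    "(\<forall>j<n. lin_form (support_vars n S) (support_row v \<sigma> j 1) z \<le> 0) \<longleftrightarrow>
      (\<forall>j<n. vertex_of z \<sigma> \<bullet> v j \<le> z (Inl j))"
    "(\<forall>i\<in>\<sigma>. lin_form (support_vars n S) (support_row v \<sigma> i (-1)) z \<le> 0) \<longleftrightarrow>
      (\<forall>i\<in>\<sigma>. z (Inl i) \<le> vertex_of z \<sigma> \<bullet> v i)"
    if \<sigma>: "\<sigma> \<in> S" for \<sigma>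
    using row[OF \<sigma>] cone_subset[OF \<sigma>] by (auto simp: subset_iff)
  have "satisfies (support_vars n S) z (support_system v n S) \<longleftrightarrow>
      (\<forall>\<sigma>\<in>S. (\<forall>j<n. lin_form (support_vars n S) (support_row v \<sigma> j 1) z \<le> 0) \<and>
        (\<forall>i\<in>\<sigma>. lin_form (support_vars n S) (support_row v \<sigma> i (-1)) z \<le> 0))"
    unfolding satisfies_def support_system_def ball_Un Set.ball_simps(9) by auto
  also have "\<dots> \<longleftrightarrow>
      (\<forall>\<sigma>\<in>S. (\<forall>j<n. vertex_of z \<sigma> \<bullet> v j \<le> z (Inl j)) \<and> (\<forall>i\<in>\<sigma>. z (Inl i) \<le> vertex_of z \<sigma> \<bullet> v i))"
    using row_bounds by simp
  also have "\<dots> \<longleftrightarrow> realizes_support v n S (\<lambda>j. z (Inl j)) (vertex_of z)"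
  proof -
    have "i < n" if "\<sigma> \<in> S" "i \<in> \<sigma>" for \<sigma> i using cone_subset that by blast
    then show ?thesis unfolding realizes_support_def by (auto intro!: antisym)
  qed
  finally show ?thesis .
qed

end

locale fan_design = complete_simplicial_fan +
  fixes u :: "nat \<Rightarrow> 'a::euclidean_space" and ray :: "nat \<Rightarrow> nat"
  assumes ray_less: "ray l < n"
    and design_direction: "u l = v (ray l) /\<^sub>R norm (v (ray l))"
begin

lemma supp_design_direction:
  "Q \<in> deformation_cone v S \<Longrightarrow> supp Q (u l) = supp Q (v (ray l)) / norm (v (ray l))"
  by (simp add: design_direction supp_normalized_generator ray_less)

lemma design_direction_eq_iff: "i < n \<Longrightarrow> u l = v i /\<^sub>R norm (v i) \<longleftrightarrow> ray l = i"
  using normalized_generator_inj[OF ray_less] design_direction by auto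

definition ray_objective :: "(nat \<Rightarrow> real) \<Rightarrow> nat \<Rightarrow> (nat \<Rightarrow> real) \<Rightarrow> real" where
  "ray_objective y m h = (\<Sum>l<m. (h (ray l) / norm (v (ray l)) - y l)\<^sup>2)"

lemma lsq_obj_eq_ray_objective:
  "Q \<in> deformation_cone v S \<Longrightarrow> lsq_obj u y m Q = ray_objective y m (\<lambda>j. supp Q (v j)) / real m"
  unfolding lsq_obj_def ray_objective_def by (simp add: supp_design_direction)

lemma ray_objective_cong: "(\<And>j. j < n \<Longrightarrow> h j = h' j) \<Longrightarrow> ray_objective y m h = ray_objective y m h'"
  unfolding ray_objective_def using ray_less by simp

lemma ray_objective_coercive: "\<exists>R. \<forall>h. ray_objective y m h \<le> M \<longrightarrow> (\<forall>l<m. \<bar>h (ray l)\<bar> \<le> R)"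
proof -
  define R where "R = (\<Sum>l<m. (sqrt \<bar>M\<bar> + \<bar>y l\<bar>) * norm (v (ray l)))"
  have "\<bar>h (ray l)\<bar> \<le> R" if h: "ray_objective y m h \<le> M" and l: "l < m" for h l
  proof -
    have "(h (ray l) / norm (v (ray l)) - y l)\<^sup>2 \<le> \<bar>M\<bar>"
      using member_le_sum[of l "{..<m}" "\<lambda>l. (h (ray l) / norm (v (ray l)) - y l)\<^sup>2"] h l
      unfolding ray_objective_def by auto
    then have "\<bar>h (ray l) / norm (v (ray l)) - y l\<bar> \<le> sqrt \<bar>M\<bar>"
      using real_sqrt_le_mono real_sqrt_abs by metis
    then have "\<bar>h (ray l)\<bar> / norm (v (ray l)) \<le> sqrt \<bar>M\<bar> + \<bar>y l\<bar>" by (simp add: abs_div)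
    then have "\<bar>h (ray l)\<bar> \<le> (sqrt \<bar>M\<bar> + \<bar>y l\<bar>) * norm (v (ray l))"
      using generator_nonzero[OF ray_less] by (simp add: divide_le_eq)
    also have "\<dots> \<le> R" unfolding R_def using l by (intro member_le_sum) auto
    finally show ?thesis .
  qed
  then show ?thesis by blast
qed

text \<open>Minimizing over the deformation cone amounts to minimizing over the support numbers of
  its realizations, i.e. over the polyhedron \<open>support_system\<close>; the objective only involves the
  support numbers of the rays that occur in the design.\<close>

lemma lse_nonempty: "lse v S u y m \<noteq> {}"
proof -
  define \<Psi> where "\<Psi> z = ray_objective y m (\<lambda>j. z (Inl j))" for z :: "nat + nat set \<times> 'a \<Rightarrow> real"
  define W :: "(nat + nat set \<times> 'a) set" where "W = Inl ` ray ` {..<m}"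
  have W: "W \<subseteq> support_vars n S" unfolding W_def support_vars_def using ray_less by auto
  have depends: "\<Psi> z = \<Psi> z'" if "\<forall>x\<in>W. z x = z' x" for z z'
    using that unfolding \<Psi>_def ray_objective_def W_def by (intro sum.cong) auto
  have continuous: "continuous_on UNIV \<Psi>"
  proof -
    have "continuous_on UNIV (\<lambda>z::nat + nat set \<times> 'a \<Rightarrow> real. z x)" for x by simp
    then show ?thesis unfolding \<Psi>_def ray_objective_def using generator_nonzero[OF ray_less]
      by (intro continuous_intros) auto
  qed
  have coercive: "\<exists>R. \<forall>z. \<Psi> z \<le> M \<longrightarrow> (\<forall>x\<in>W. \<bar>z x\<bar> \<le> R)" for M
    using ray_objective_coercive[of y m M] unfolding \<Psi>_def W_def by auto
  obtain X0 where "realizes_support v n S (\<lambda>j. supp {0} (v j)) X0"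
    using deformation_cone_realizable[OF zero_in_deformation_cone] by blast
  then have feasible:
    "satisfies (support_vars n S) (encode_support (\<lambda>j. supp {0} (v j)) X0) (support_system v n S)"
    by (simp add: satisfies_support_system_iff)
  obtain z where z: "satisfies (support_vars n S) z (support_system v n S)"
    and z_min: "\<forall>z'. satisfies (support_vars n S) z' (support_system v n S) \<longrightarrow> \<Psi> z \<le> \<Psi> z'"
    using satisfies_attains_min[OF finite_support_vars finite_support_system W depends continuous
        coercive feasible] by blast
  define Q where "Q = convex hull (vertex_of z ` S)"
  have realizes: "realizes_support v n S (\<lambda>j. z (Inl j)) (vertex_of z)"
    using z satisfies_support_system_iff by blast
  have Q: "Q \<in> deformation_cone v S"
    unfolding Q_def using realization_in_deformation_cone[OF realizes] .
  have "lsq_obj u y m Q \<le> lsq_obj u y m Q'" if Q': "Q' \<in> deformation_cone v S" for Q'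
  proof -
    obtain X where "realizes_support v n S (\<lambda>j. supp Q' (v j)) X"
      using deformation_cone_realizable[OF Q'] by blast
    then have "\<Psi> z \<le> \<Psi> (encode_support (\<lambda>j. supp Q' (v j)) X)"
      using z_min by (simp add: satisfies_support_system_iff)
    moreover have "ray_objective y m (\<lambda>j. supp Q (v j)) = \<Psi> z"
      unfolding \<Psi>_def Q_def using supp_realization[OF realizes] by (intro ray_objective_cong) simp
    ultimately show ?thesis
      using lsq_obj_eq_ray_objective[OF Q] lsq_obj_eq_ray_objective[OF Q'] unfolding \<Psi>_def
      by (simp add: divide_right_mono)
  qed
  then show ?thesis using Q unfolding lse_def by blast
qed

end

lemma polytopal_fan_design:
  fixes v :: "nat \<Rightarrow> 'a::euclidean_space"
  assumes fan: "simplicial_fan v n S" and polytopal: "polytopal_fan v S"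
    and u: "\<forall>l. u l \<in> (\<lambda>i. v i /\<^sub>R norm (v i)) ` {..<n}"
  obtains ray where "fan_design v n S u ray"
proof -
  have "\<forall>l. \<exists>i. i < n \<and> u l = v i /\<^sub>R norm (v i)" using u by auto
  then obtain ray where ray: "\<forall>l. ray l < n \<and> u l = v (ray l) /\<^sub>R norm (v (ray l))" by metis
  have "{ray 0} \<in> S" using fan ray by (simp add: simplicial_fan_def)
  then have "S \<noteq> {}" by blast
  have "fan_design v n S u ray"
  proof unfold_locales
    show "\<exists>\<sigma>\<in>S. w \<in> gen_cone v \<sigma>" for w by (rule polytopal_fan_complete[OF polytopal \<open>S \<noteq> {}\<close>])
  qed (use fan ray in blast)+
  then show ?thesis using that by blast
qed

section \<open>Consistency of the least-squares estimate\<close>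

lemma sum_squares_le_of_residuals_le:
  fixes w e :: "'l \<Rightarrow> real"
  assumes "(\<Sum>l\<in>L. (w l - e l)\<^sup>2) \<le> (\<Sum>l\<in>L. (e l)\<^sup>2)"
  shows "(\<Sum>l\<in>L. (w l)\<^sup>2) \<le> 2 * (\<Sum>l\<in>L. w l * e l)"
proof -
  have "(\<Sum>l\<in>L. (w l - e l)\<^sup>2) = (\<Sum>l\<in>L. (w l)\<^sup>2) - 2 * (\<Sum>l\<in>L. w l * e l) + (\<Sum>l\<in>L. (e l)\<^sup>2)"
    by (simp add: power2_diff sum.distrib sum_subtractf sum_distrib_left algebra_simps)
  then show ?thesis using assms by linarith
qed

lemma weighted_sum_squares_bound:
  fixes w E c :: "'i \<Rightarrow> real"
  assumes I: "finite I" and a: "a > 0" and c: "\<forall>i\<in>I. a \<le> c i"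
    and le: "(\<Sum>i\<in>I. c i * (w i)\<^sup>2) \<le> 2 * (\<Sum>i\<in>I. w i * E i)" and i: "i \<in> I"
  shows "\<bar>w i\<bar> \<le> 2 * (\<Sum>i\<in>I. \<bar>E i\<bar>) / a"
proof -
  define W where "W = Max ((\<lambda>i. \<bar>w i\<bar>) ` I)"
  have W_ge: "\<bar>w k\<bar> \<le> W" if "k \<in> I" for k unfolding W_def using I that by (intro Max_ge) auto
  have "W \<in> (\<lambda>i. \<bar>w i\<bar>) ` I" unfolding W_def using I i by (intro Max_in) auto
  then obtain i0 where i0: "i0 \<in> I" "W = \<bar>w i0\<bar>" by blast
  have c_nonneg: "0 \<le> c k" if "k \<in> I" for k using c a that by force
  have "a * W\<^sup>2 \<le> c i0 * (w i0)\<^sup>2" using c i0 by (simp add: mult_right_mono)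
  also have "\<dots> \<le> (\<Sum>i\<in>I. c i * (w i)\<^sup>2)"
    using I i0(1) c_nonneg by (intro member_le_sum) auto
  also have "\<dots> \<le> 2 * (\<Sum>i\<in>I. w i * E i)" by (rule le)
  also have "\<dots> \<le> 2 * (\<Sum>i\<in>I. W * \<bar>E i\<bar>)"
  proof -
    have "w k * E k \<le> W * \<bar>E k\<bar>" if "k \<in> I" for k
    proof -
      have "w k * E k \<le> \<bar>w k\<bar> * \<bar>E k\<bar>" by (metis abs_ge_self abs_mult)
      also have "\<dots> \<le> W * \<bar>E k\<bar>" using W_ge[OF that] by (simp add: mult_right_mono)
      finally show ?thesis .
    qed
    then show ?thesis by (intro mult_left_mono sum_mono) auto
  qed
  finally have "a * W * W \<le> 2 * (\<Sum>i\<in>I. \<bar>E i\<bar>) * W"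
    by (simp add: power2_eq_square sum_distrib_left algebra_simps)
  then have "W \<le> 2 * (\<Sum>i\<in>I. \<bar>E i\<bar>) / a"
  proof (cases "W = 0")
    case True
    then show ?thesis using a by (simp add: sum_nonneg)
  next
    case False
    then have "W > 0" using i0(2) by simp
    then have "a * W \<le> 2 * (\<Sum>i\<in>I. \<bar>E i\<bar>)" using \<open>a * W * W \<le> _\<close> by simp
    then show ?thesis using a by (simp add: le_divide_eq mult.commute)
  qed
  then show ?thesis using W_ge[OF i] by linarith
qed

context fan_design
begin

lemma sum_group_rays: "(\<Sum>l<m. f l) = (\<Sum>i<n. \<Sum>l\<in>{..<m} \<inter> {l. ray l = i}. f l)"
proof -
  have "(\<Sum>i<n. \<Sum>l\<in>{x\<in>{..<m}. ray x = i}. f l) = (\<Sum>l<m. f l)"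
    using ray_less by (intro sum.group) auto
  then show ?thesis by (simp add: Int_def conj_commute)
qed

definition ray_noise :: "(nat \<Rightarrow> real) \<Rightarrow> nat \<Rightarrow> real" where
  "ray_noise e m = (\<Sum>i<n. \<bar>\<Sum>l\<in>{..<m} \<inter> {l. ray l = i}. e l\<bar> / real m)"

text \<open>The basic inequality of least squares: comparing the objective at the estimate with its
  value at the true polytope bounds the estimation error on the rays by the noise.\<close>

lemma lse_ray_error_bound:
  assumes P: "P \<in> deformation_cone v S" and Q: "Q \<in> lse v S u (\<lambda>l. supp P (u l) + e l) m"
    and m: "m > 0" and \<delta>: "\<delta> > 0"
    and freq: "\<forall>i<n. real m * \<delta> \<le> real (card ({..<m} \<inter> {l. ray l = i}))" and j: "j < n"
  shows "\<bar>supp Q (v j) - supp P (v j)\<bar> \<le> 2 * norm (v j) / \<delta> * ray_noise e m"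
proof -
  have Q_dc: "Q \<in> deformation_cone v S" using Q unfolding lse_def by blast
  define w where "w i = (supp Q (v i) - supp P (v i)) / norm (v i)" for i
  have "lsq_obj u (\<lambda>l. supp P (u l) + e l) m Q \<le> lsq_obj u (\<lambda>l. supp P (u l) + e l) m P"
    using Q P unfolding lse_def by blast
  moreover have "supp Q (u l) - (supp P (u l) + e l) = w (ray l) - e l" for l
    unfolding w_def supp_design_direction[OF Q_dc] supp_design_direction[OF P]
    by (simp add: diff_divide_distrib)
  ultimately have "(\<Sum>l<m. (w (ray l) - e l)\<^sup>2) \<le> (\<Sum>l<m. (e l)\<^sup>2)"
    using m unfolding lsq_obj_def by (simp add: divide_le_cancel)
  then have "(\<Sum>l<m. (w (ray l))\<^sup>2) \<le> 2 * (\<Sum>l<m. w (ray l) * e l)"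
    by (rule sum_squares_le_of_residuals_le)
  then have "(\<Sum>i<n. real (card ({..<m} \<inter> {l. ray l = i})) * (w i)\<^sup>2)
      \<le> 2 * (\<Sum>i<n. w i * (\<Sum>l\<in>{..<m} \<inter> {l. ray l = i}. e l))"
    unfolding sum_group_rays[of _ m] by (simp add: sum_distrib_left)
  then have "\<bar>w j\<bar> \<le> 2 * (\<Sum>i<n. \<bar>\<Sum>l\<in>{..<m} \<inter> {l. ray l = i}. e l\<bar>) / (real m * \<delta>)"
    using freq m \<delta> j by (intro weighted_sum_squares_bound) auto
  also have "\<dots> = 2 / \<delta> * ray_noise e m"
    unfolding ray_noise_def by (simp add: sum_divide_distrib[symmetric])
  finally have "\<bar>w j\<bar> \<le> 2 / \<delta> * ray_noise e m" .
  then have "norm (v j) * \<bar>w j\<bar> \<le> norm (v j) * (2 / \<delta> * ray_noise e m)" by (rule mult_left_mono) simp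
  moreover have "\<bar>supp Q (v j) - supp P (v j)\<bar> = norm (v j) * \<bar>w j\<bar>"
    unfolding w_def using generator_nonzero[OF j] by (simp add: abs_div)
  ultimately show ?thesis by (simp add: mult.commute mult.left_commute)
qed

lemma lse_hausdist_le:
  assumes P: "P \<in> deformation_cone v S" and \<delta>: "\<delta> > 0"
  shows "\<exists>C. \<forall>m>0. \<forall>e Q. Q \<in> lse v S u (\<lambda>l. supp P (u l) + e l) m \<longrightarrow>
    (\<forall>i<n. real m * \<delta> \<le> real (card ({..<m} \<inter> {l. ray l = i}))) \<longrightarrow>
    hausdist Q P \<le> C * ray_noise e m"
proof -
  obtain C where C: "\<forall>Q\<in>deformation_cone v S. \<forall>P\<in>deformation_cone v S. \<forall>t\<ge>0.
     (\<forall>j<n. \<bar>supp Q (v j) - supp P (v j)\<bar> \<le> t) \<longrightarrow> hausdist Q P \<le> C * t"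
    using deformation_cone_hausdist_le by blast
  define V where "V = (\<Sum>i<n. norm (v i))"
  have "hausdist Q P \<le> C * (2 * V / \<delta> * ray_noise e m)"
    if m: "m > 0" and Q: "Q \<in> lse v S u (\<lambda>l. supp P (u l) + e l) m"
      and freq: "\<forall>i<n. real m * \<delta> \<le> real (card ({..<m} \<inter> {l. ray l = i}))" for m e Q
  proof -
    have "0 \<le> ray_noise e m" unfolding ray_noise_def by (simp add: sum_nonneg)
    then have "\<bar>supp Q (v j) - supp P (v j)\<bar> \<le> 2 * V / \<delta> * ray_noise e m" if j: "j < n" for j
    proof -
      have "norm (v j) \<le> V" unfolding V_def using j by (intro member_le_sum) auto
      then have "2 * norm (v j) / \<delta> * ray_noise e m \<le> 2 * V / \<delta> * ray_noise e m"
        using \<delta> \<open>0 \<le> ray_noise e m\<close> by (intro mult_right_mono divide_right_mono) auto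
      then show ?thesis using lse_ray_error_bound[OF P Q m \<delta> freq j] by linarith
    qed
    moreover have "Q \<in> deformation_cone v S" using Q unfolding lse_def by blast
    moreover have "0 \<le> 2 * V / \<delta> * ray_noise e m"
      using \<open>0 \<le> ray_noise e m\<close> \<delta> unfolding V_def by (simp add: sum_nonneg)
    ultimately show ?thesis using C P by blast
  qed
  then show ?thesis by (intro exI[of _ "C * (2 * V / \<delta>)"]) (simp add: mult.assoc)
qed

lemma lse_consistent:
  assumes P: "P \<in> deformation_cone v S" and \<delta>: "\<delta> > 0"
    and freq: "\<forall>m\<ge>N. \<forall>i<n. real m * \<delta> \<le> real (card ({..<m} \<inter> {l. ray l = i}))"
    and noise: "\<forall>i<n. (\<lambda>m. (\<Sum>l\<in>{..<m} \<inter> {l. ray l = i}. e l) / real m) \<longlonglongrightarrow> 0"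
    and Qs: "\<forall>m\<ge>1. Qs m \<in> lse v S u (\<lambda>l. supp P (u l) + e l) m"
  shows "(\<lambda>m. hausdist (Qs m) P) \<longlonglongrightarrow> 0"
proof -
  obtain C where C: "\<forall>m>0. \<forall>e Q. Q \<in> lse v S u (\<lambda>l. supp P (u l) + e l) m \<longrightarrow>
      (\<forall>i<n. real m * \<delta> \<le> real (card ({..<m} \<inter> {l. ray l = i}))) \<longrightarrow>
      hausdist Q P \<le> C * ray_noise e m"
    using lse_hausdist_le[OF P \<delta>] by blast
  have "norm (hausdist (Qs m) P) \<le> C * ray_noise e m" if "m \<ge> max N 1" for m
  proof -
    have "Qs m \<in> deformation_cone v S" using Qs that unfolding lse_def by auto
    then have "0 \<le> hausdist (Qs m) P"
      by (intro hausdist_nonneg deformation_cone_compact deformation_cone_nonempty)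
    then show ?thesis using C Qs freq that by simp
  qed
  then have bound: "eventually (\<lambda>m. norm (hausdist (Qs m) P) \<le> C * ray_noise e m) sequentially"
    unfolding eventually_sequentially by blast
  have "(\<lambda>m. \<bar>(\<Sum>l\<in>{..<m} \<inter> {l. ray l = i}. e l) / real m\<bar>) \<longlonglongrightarrow> 0" if "i < n" for i
    using tendsto_rabs_zero[OF noise[rule_format, OF that]] .
  then have "(\<lambda>m. C * ray_noise e m) \<longlonglongrightarrow> C * (\<Sum>i<n. 0)"
    unfolding ray_noise_def by (intro tendsto_intros) auto
  then have "(\<lambda>m. C * ray_noise e m) \<longlonglongrightarrow> 0" by simp
  with bound show ?thesis by (rule Lim_null_comparison)
qed

end

section \<open>A strong law for Gaussian noise\<close>

lemma LIMSEQ_zero_of_eventually_less_inverse: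
  fixes f :: "nat \<Rightarrow> real"
  assumes "\<And>k. eventually (\<lambda>m. \<bar>f m\<bar> < 1 / real (Suc k)) sequentially"
  shows "f \<longlonglongrightarrow> 0"
proof (rule tendstoI)
  fix e :: real assume "e > 0"
  then obtain k where "1 / real (Suc k) < e" by (metis nat_approx_posE)
  then show "eventually (\<lambda>m. dist (f m) 0 < e) sequentially"
    using assms[of k] by (auto elim: eventually_mono)
qed

context prob_space
begin

lemma centered_normal_tail_le:
  assumes D: "distributed M lborel Z (normal_density 0 s)" and s: "s > 0" and c: "c > 0"
  shows "prob {x\<in>space M. c \<le> \<bar>Z x\<bar>} \<le> 3 * s^4 / c^4"
proof -
  have [measurable]: "Z \<in> borel_measurable M"
    using distributed_measurable[OF D] by simp
  have "has_bochner_integral lborel (\<lambda>x. normal_density 0 s x * x ^ 4) (3 * s^4)"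
    using normal_moment_even[OF s, of 0 2] s
    by (simp add: fact_numeral field_simps power2_eq_square power4_eq_xxxx)
  then have "integrable M (\<lambda>x. Z x ^ 4)" and "(\<integral>x. Z x ^ 4 \<partial>M) = 3 * s^4"
    using distributed_integrable[OF D, of "\<lambda>x. x ^ 4"] distributed_integral[OF D, of "\<lambda>x. x ^ 4"]
    by (simp_all add: has_bochner_integral_iff)
  moreover have "{x\<in>space M. c \<le> \<bar>Z x\<bar>} = {x\<in>space M. c^4 \<le> Z x ^ 4}"
  proof -
    have "c \<le> \<bar>z\<bar> \<longleftrightarrow> c^4 \<le> \<bar>z\<bar>^4" for z :: real
      using power_mono_iff[of c "\<bar>z\<bar>" 4] c by linarith
    then show ?thesis by (simp add: power_even_abs_numeral)
  qed
  moreover have "prob {x\<in>space M. c^4 \<le> Z x ^ 4} \<le> (\<integral>x. Z x ^ 4 \<partial>M) / c^4"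
    using calculation(1) c by (intro integral_Markov_inequality_measure[where A="space M"]) auto
  ultimately show ?thesis by simp
qed

context
  fixes \<epsilon> :: "nat \<Rightarrow> 'a \<Rightarrow> real" and \<sigma> :: "nat \<Rightarrow> real" and \<gamma> :: real
  assumes indep: "indep_vars (\<lambda>_. borel) \<epsilon> UNIV"
    and \<sigma>_pos: "\<forall>i. \<sigma> i > 0"
    and gauss: "\<forall>i. distributed M lborel (\<epsilon> i) (normal_density 0 (\<sigma> i))"
    and var_bound: "\<forall>i. (\<sigma> i)\<^sup>2 \<le> \<gamma>"
begin

lemma gaussian_partial_sum_tail_le:
  assumes \<eta>: "\<eta> > 0" and m: "m \<ge> 1"
  shows "prob {\<omega>\<in>space M. \<eta> * real m \<le> \<bar>\<Sum>l\<in>{..<m} \<inter> A. \<epsilon> l \<omega>\<bar>} \<le> 3 * \<gamma>\<^sup>2 / (\<eta>^4 * (real m)\<^sup>2)"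
proof (cases "{..<m} \<inter> A = {}")
  case True
  have "\<eta> * real m > 0" using \<eta> m by simp
  then have "{\<omega>\<in>space M. \<eta> * real m \<le> \<bar>\<Sum>l\<in>{..<m} \<inter> A. \<epsilon> l \<omega>\<bar>} = {}" using True by auto
  then have "prob {\<omega>\<in>space M. \<eta> * real m \<le> \<bar>\<Sum>l\<in>{..<m} \<inter> A. \<epsilon> l \<omega>\<bar>} = 0" by (metis measure_empty)
  then show ?thesis by simp
next
  case False
  define I where "I = {..<m} \<inter> A"
  define s where "s = sqrt (\<Sum>l\<in>I. (\<sigma> l)\<^sup>2)"
  have variance: "0 < (\<Sum>l\<in>I. (\<sigma> l)\<^sup>2)" "(\<Sum>l\<in>I. (\<sigma> l)\<^sup>2) \<le> real m * \<gamma>"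
  proof -
    have "0 < (\<sigma> l)\<^sup>2" for l using \<sigma>_pos[rule_format, of l] by simp
    then show "0 < (\<Sum>l\<in>I. (\<sigma> l)\<^sup>2)" using False unfolding I_def by (intro sum_pos) auto
    have "(\<Sum>l\<in>I. (\<sigma> l)\<^sup>2) \<le> real (card I) * \<gamma>"
      using var_bound sum_bounded_above[of I "\<lambda>l. (\<sigma> l)\<^sup>2" \<gamma>] by auto
    also have "\<dots> \<le> real m * \<gamma>"
      using card_mono[of "{..<m}" I] var_bound order.trans[OF zero_le_power2]
      unfolding I_def by (intro mult_right_mono) auto
    finally show "(\<Sum>l\<in>I. (\<sigma> l)\<^sup>2) \<le> real m * \<gamma>" .
  qed
  have "distributed M lborel (\<lambda>x. \<Sum>l\<in>I. \<epsilon> l x) (normal_density (\<Sum>l\<in>I. 0) s)"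
    unfolding s_def I_def using False \<sigma>_pos gauss indep_vars_subset[OF indep]
    by (intro sum_indep_normal) auto
  then have "prob {\<omega>\<in>space M. \<eta> * real m \<le> \<bar>\<Sum>l\<in>I. \<epsilon> l \<omega>\<bar>} \<le> 3 * s^4 / (\<eta> * real m)^4"
    using centered_normal_tail_le[of _ s] variance(1) \<eta> m unfolding s_def by simp
  also have "s^4 = (\<Sum>l\<in>I. (\<sigma> l)\<^sup>2)\<^sup>2"
    unfolding s_def using variance(1) by (simp add: power4_eq_xxxx power2_eq_square)
  also have "3 * (\<Sum>l\<in>I. (\<sigma> l)\<^sup>2)\<^sup>2 / (\<eta> * real m)^4 \<le> 3 * (real m * \<gamma>)\<^sup>2 / (\<eta> * real m)^4"
    using variance \<eta> m by (intro divide_right_mono mult_left_mono power_mono) auto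
  also have "\<dots> = 3 * \<gamma>\<^sup>2 / (\<eta>^4 * (real m)\<^sup>2)"
    using m \<eta> by (simp add: field_simps power2_eq_square power4_eq_xxxx)
  finally show ?thesis unfolding I_def .
qed

text \<open>The fourth-moment tail bound is summable in \<open>m\<close>, so Borel--Cantelli applies.\<close>

lemma gaussian_subset_averages_tendsto_zero:
  "AE \<omega> in M. (\<lambda>m. (\<Sum>l\<in>{..<m} \<inter> A. \<epsilon> l \<omega>) / real m) \<longlonglongrightarrow> 0"
proof -
  have [measurable]: "\<epsilon> l \<in> borel_measurable M" for l
    using indep unfolding indep_vars_def by auto
  define avg where "avg m \<omega> = (\<Sum>l\<in>{..<Suc m} \<inter> A. \<epsilon> l \<omega>) / real (Suc m)" for m \<omega>
  have eventually_small: "AE \<omega> in M. eventually (\<lambda>m. \<bar>avg m \<omega>\<bar> < \<eta>) sequentially"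
    if \<eta>: "\<eta> > 0" for \<eta>
  proof -
    define B where "B m = {\<omega>\<in>space M. \<eta> * real (Suc m) \<le> \<bar>\<Sum>l\<in>{..<Suc m} \<inter> A. \<epsilon> l \<omega>\<bar>}" for m
    have [measurable]: "B m \<in> sets M" for m unfolding B_def by measurable
    have "summable (\<lambda>m. 3 * \<gamma>\<^sup>2 / \<eta>^4 * inverse (real (m + 1) ^ 2))"
      by (intro summable_mult summable_ignore_initial_segment[of "\<lambda>n. inverse (real n ^ 2)"]
          inverse_power_summable) auto
    then have "summable (\<lambda>m. measure M (B m))"
    proof (rule summable_comparison_test')
      fix m :: nat
      have "measure M (B m) \<le> 3 * \<gamma>\<^sup>2 / (\<eta>^4 * (real (Suc m))\<^sup>2)"
        unfolding B_def using gaussian_partial_sum_tail_le[OF \<eta>, of "Suc m"] by simp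
      then show "norm (measure M (B m)) \<le> 3 * \<gamma>\<^sup>2 / \<eta>^4 * inverse (real (m + 1) ^ 2)"
        by (simp add: field_simps)
    qed
    from borel_cantelli_AE1[OF _ _ this] show ?thesis
      by (rule AE_mp) (auto simp: B_def avg_def divide_less_eq less_top[symmetric]
          elim!: eventually_mono intro!: AE_I2)
  qed
  have "AE \<omega> in M. \<forall>k. eventually (\<lambda>m. \<bar>avg m \<omega>\<bar> < 1 / real (Suc k)) sequentially"
    unfolding AE_all_countable by (intro allI eventually_small) simp
  then show ?thesis
  proof (rule AE_mp, intro AE_I2 impI)
    fix \<omega> assume "\<forall>k. eventually (\<lambda>m. \<bar>avg m \<omega>\<bar> < 1 / real (Suc k)) sequentially"
    then have "(\<lambda>m. avg m \<omega>) \<longlonglongrightarrow> 0" by (intro LIMSEQ_zero_of_eventually_less_inverse) auto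
    then show "(\<lambda>m. (\<Sum>l\<in>{..<m} \<inter> A. \<epsilon> l \<omega>) / real m) \<longlonglongrightarrow> 0"
      unfolding avg_def by (rule LIMSEQ_imp_Suc)
  qed
qed

end

end

theorem corollary4p3:
  fixes v :: "nat \<Rightarrow> 'a::euclidean_space" and n :: nat and S :: "nat set set"
    and u :: "nat \<Rightarrow> 'a" and \<delta> :: real and N :: nat and P :: "'a set"
    and M :: "'w measure" and \<epsilon> :: "nat \<Rightarrow> 'w \<Rightarrow> real" and \<sigma> :: "nat \<Rightarrow> real" and \<gamma> :: real
  assumes fan: "simplicial_fan v n S"
    and polytopal: "polytopal_fan v S"
    and u_dirs: "\<forall>l. u l \<in> (\<lambda>i. v i /\<^sub>R norm (v i)) ` {..<n}"
    and \<delta>_pos: "\<delta> > 0"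
    and freq: "\<forall>m\<ge>N. \<forall>i<n. real (card {l\<in>{..<m}. u l = v i /\<^sub>R norm (v i)}) \<ge> real m * \<delta>"
    and P: "P \<in> deformation_cone v S"
    and M: "prob_space M"
    and indep: "prob_space.indep_vars M (\<lambda>_. borel) \<epsilon> UNIV"
    and \<sigma>_pos: "\<forall>i. \<sigma> i > 0"
    and gauss: "\<forall>i. distributed M lborel (\<epsilon> i) (normal_density 0 (\<sigma> i))"
    and var_bound: "\<forall>i. (\<sigma> i)\<^sup>2 \<le> \<gamma>"
  shows "AE \<omega> in M.
           (\<forall>m\<ge>1. lse v S u (\<lambda>l. supp P (u l) + \<epsilon> l \<omega>) m \<noteq> {}) \<and>
           (\<forall>Qs. (\<forall>m\<ge>1. Qs m \<in> lse v S u (\<lambda>l. supp P (u l) + \<epsilon> l \<omega>) m) \<longrightarrow>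
                 (\<lambda>m. hausdist (Qs m) P) \<longlonglongrightarrow> 0)"
proof -
  obtain ray where "fan_design v n S u ray" using polytopal_fan_design[OF fan polytopal u_dirs] .
  then interpret fan_design v n S u ray .
  have "{l\<in>{..<m}. u l = v i /\<^sub>R norm (v i)} = {..<m} \<inter> {l. ray l = i}" if "i < n" for m i
    using design_direction_eq_iff[OF that] by blast
  then have freq_rays: "\<forall>m\<ge>N. \<forall>i<n. real m * \<delta> \<le> real (card ({..<m} \<inter> {l. ray l = i}))"
    using freq by simp
  have "AE \<omega> in M. \<forall>i\<in>{..<n}. (\<lambda>m. (\<Sum>l\<in>{..<m} \<inter> {l. ray l = i}. \<epsilon> l \<omega>) / real m) \<longlonglongrightarrow> 0"
    using prob_space.gaussian_subset_averages_tendsto_zero[OF M indep \<sigma>_pos gauss var_bound]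
    by (intro AE_finite_allI) blast+
  then show ?thesis
  proof (rule AE_mp, intro AE_I2 impI conjI allI)
    fix \<omega> Qs
    assume "\<forall>i\<in>{..<n}. (\<lambda>m. (\<Sum>l\<in>{..<m} \<inter> {l. ray l = i}. \<epsilon> l \<omega>) / real m) \<longlonglongrightarrow> 0"
      and "\<forall>m\<ge>1. Qs m \<in> lse v S u (\<lambda>l. supp P (u l) + \<epsilon> l \<omega>) m"
    then show "(\<lambda>m. hausdist (Qs m) P) \<longlonglongrightarrow> 0"
      using lse_consistent[OF P \<delta>_pos freq_rays, of "\<lambda>l. \<epsilon> l \<omega>" Qs] by simp
  qed (simp add: lse_nonempty)
qed

end
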